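(* For every integer $n\ge1$, the 2-dimensional substitution $\omega'_n:\Omega'_n\to\Omega'_n$ satisfies $\Omega_n\subseteq\overline{\omega'_n(\Omega'_n)}^{\sigma}:=\{\sigma^{\mathbf k}\omega'_n(x)\mid\mathbf k\in\mathbb Z^2,\ x\in\Omega'_n\}$.
   Context: Write $\bar m=m+1$. $V_n=\{(v_0,v_1,v_2)\in\mathbb{Z}^3: 0\le v_0\le v_1\le 1,\ v_1\le v_2\le n+1\}$, elements written as words $v_0v_1v_2$. A Wang tile is $t=(a,b,c,d)$ with $\mathrm{RIGHT}(t)=a$, $\mathrm{TOP}(t)=b$, $\mathrm{LEFT}(t)=c$, $\mathrm{BOTTOM}(t)=d$; $\hat t=(b,a,d,c)$, $\hat S=\{\hat t:t\in S\}$. Define (as (right, top, left, bottom)): $W_n=\{(11(i+1),11(j+1),11i,11j):1\le i,j\le n\}$; $b_n^i=(00(i+1),111,00i,11n)$, $B'_n=\{b_n^i:0\le i\le n\}$, $B_n=\{b_n^i:0\le i\le n-1\}$; $G_n=\{(01(i+1),111,00i,11(n+1)):0\le i\le n\}$; $Y_n=\{(01(i+1),112,01i,11(n+1)):1\le i\le n\}$; $A_n=\{(00(i+1),112,01i,11n):1\le i\le n\}$; $j_n^{k,l,r,s}=((0,k,l),(0,r,s),(0,s,r+n),(0,l,k+n))$ for $(k,l),(r,s)\in\{(0,0),(0,1),(1,1)\}$; $J'_n$ is the set of these 9 tiles and $J_n=J'_n\setminus\{j_n^{0,0,1,1},j_n^{1,1,0,0}\}$. $\mathcal T'_n=W_n\cup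 B'_n\cup G_n\cup Y_n\cup A_n\cup\hat B'_n\cup\hat G_n\cup\hat Y_n\cup\hat A_n\cup J'_n$ and $\mathcal T_n=W_n\cup B_n\cup G_n\cup Y_n\cup\hat B_n\cup\hat G_n\cup\hat Y_n\cup J_n$. $\Omega'_n$ (resp. $\Omega_n$) is the set of configurations $x:\mathbb Z^2\to\mathcal T'_n$ (resp. $\mathcal T_n$) with $\mathrm{RIGHT}(x(\mathbf m))=\mathrm{LEFT}(x(\mathbf m+\mathbf e_1))$ and $\mathrm{TOP}(x(\mathbf m))=\mathrm{BOTTOM}(x(\mathbf m+\mathbf e_2))$; $(\sigma^{\mathbf k}x)_{\mathbf m}=x_{\mathbf m+\mathbf k}$. Labels of a valid rectangular pattern: bottom/top labels read left to right along bottom/top row, left/right labels read bottom to top along left/right column. $\tau_n:V_n\to V_n^*$ is $\tau_n(xyz)=(0,x-y+1,n)\cdot(11n)^{z-x-1}\cdot(11\bar n)^{n+1-z}$ if $x\ne z$, and $\tau_n(xyz)=(0,x-y+1,n+1)\cdot(11\bar n)^{n-z}$ if $x=z$. For $t=(\alpha,\beta,u,v)\in\mathcal T'_n$, $\omega'_n(t)$ is the unique valid rectangular pattern over $\mathcal T'_n$ with right, top, left, bottom labels $\tau_n(\alpha),\tau_n(\beta),\tau_n(u),\tau_n(v)$. For $x\in\Omega'_n$, $\omega'_n(x)$ is the configuration obtained by concatenating the patterns $\omega'_n(x_{\mathbf m})$ according to the positions $\mathbf m$, with the lower-left cell of $\omega'_n(x_{\mathbf 0})$ at the origin; it lies in $\Omega'_n$.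 *)

theory Defs
  imports Main
begin

text \<open>A colour is a word v0 v1 v2, represented as a triple of integers.
  A Wang tile is (right, top, left, bottom).\<close>

type_synonym color = "int \<times> int \<times> int"
type_synonym tile = "color \<times> color \<times> color \<times> color"

definition RIGHT :: "tile \<Rightarrow> color" where "RIGHT t = fst t"
definition TOP :: "tile \<Rightarrow> color" where "TOP t = fst (snd t)"
definition LEFT :: "tile \<Rightarrow> color" where "LEFT t = fst (snd (snd t))"
definition BOTTOM :: "tile \<Rightarrow> color" where "BOTTOM t = snd (snd (snd t))"

definition hat :: "tile \<Rightarrow> tile" where
  "hat t = (case t of (a, b, c, d) \<Rightarrow> (b, a, d, c))"

definition Wset :: "nat \<Rightarrow> tile set" where
  "Wset n = {((1,1,i+1),(1,1,j+1),(1,1,i),(1,1,j)) | i j. 1 \<le> i \<and> i \<le> int n \<and> 1 \<le> j \<and> j \<le> int n}"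

definition btile :: "nat \<Rightarrow> int \<Rightarrow> tile" where
  "btile n i = ((0,0,i+1),(1,1,1),(0,0,i),(1,1,int n))"

definition B'set :: "nat \<Rightarrow> tile set" where
  "B'set n = {btile n i | i. 0 \<le> i \<and> i \<le> int n}"

definition Bset :: "nat \<Rightarrow> tile set" where
  "Bset n = {btile n i | i. 0 \<le> i \<and> i \<le> int n - 1}"

definition Gset :: "nat \<Rightarrow> tile set" where
  "Gset n = {((0,1,i+1),(1,1,1),(0,0,i),(1,1,int n + 1)) | i. 0 \<le> i \<and> i \<le> int n}"

definition Yset :: "nat \<Rightarrow> tile set" where
  "Yset n = {((0,1,i+1),(1,1,2),(0,1,i),(1,1,int n + 1)) | i. 1 \<le> i \<and> i \<le> int n}"

definition Aset :: "nat \<Rightarrow> tile set" where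
  "Aset n = {((0,0,i+1),(1,1,2),(0,1,i),(1,1,int n)) | i. 1 \<le> i \<and> i \<le> int n}"

definition jtile :: "nat \<Rightarrow> int \<Rightarrow> int \<Rightarrow> int \<Rightarrow> int \<Rightarrow> tile" where
  "jtile n k l r s = ((0,k,l),(0,r,s),(0,s,r + int n),(0,l,k + int n))"

definition Jpairs :: "(int \<times> int) set" where
  "Jpairs = {(0,0),(0,1),(1,1)}"

definition J'set :: "nat \<Rightarrow> tile set" where
  "J'set n = {jtile n k l r s | k l r s. (k,l) \<in> Jpairs \<and> (r,s) \<in> Jpairs}"

definition Jset :: "nat \<Rightarrow> tile set" where
  "Jset n = J'set n - {jtile n 0 0 1 1, jtile n 1 1 0 0}"

definition T'set :: "nat \<Rightarrow> tile set" where
  "T'set n = Wset n \<union> B'set n \<union> Gset n \<union> Yset n \<union> Aset n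
     \<union> hat ` B'set n \<union> hat ` Gset n \<union> hat ` Yset n \<union> hat ` Aset n \<union> J'set n"

definition Tset :: "nat \<Rightarrow> tile set" where
  "Tset n = Wset n \<union> Bset n \<union> Gset n \<union> Yset n
     \<union> hat ` Bset n \<union> hat ` Gset n \<union> hat ` Yset n \<union> Jset n"

type_synonym config = "int \<times> int \<Rightarrow> tile"

definition valid_config :: "tile set \<Rightarrow> config \<Rightarrow> bool" where
  "valid_config T x \<longleftrightarrow>
     (\<forall>a b. x (a, b) \<in> T
        \<and> RIGHT (x (a, b)) = LEFT (x (a + 1, b))
        \<and> TOP (x (a, b)) = BOTTOM (x (a, b + 1)))"

definition Omega' :: "nat \<Rightarrow> config set" where
  "Omega' n = {x. valid_config (T'set n) x}"

definition Omega :: "nat \<Rightarrow> config set" where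
  "Omega n = {x. valid_config (Tset n) x}"

definition shift :: "int \<times> int \<Rightarrow> config \<Rightarrow> config" where
  "shift k x = (\<lambda>(a, b). x (a + fst k, b + snd k))"

definition tau :: "nat \<Rightarrow> color \<Rightarrow> color list" where
  "tau n c = (case c of (x, y, z) \<Rightarrow>
     (if x \<noteq> z then (0, x - y + 1, int n) # replicate (nat (z - x - 1)) (1, 1, int n)
                      @ replicate (nat (int n + 1 - z)) (1, 1, int n + 1)
      else (0, x - y + 1, int n + 1) # replicate (nat (int n - z)) (1, 1, int n + 1)))"

text \<open>Rectangular patterns of width w and height h: cell (i,j) with i < w, j < h,
  (0,0) the lower-left cell.\<close>

definition valid_pattern :: "tile set \<Rightarrow> nat \<Rightarrow> nat \<Rightarrow> (nat \<times> nat \<Rightarrow> tile) \<Rightarrow> bool" where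
  "valid_pattern T w h p \<longleftrightarrow>
     (\<forall>i j. i < w \<and> j < h \<longrightarrow> p (i, j) \<in> T)
   \<and> (\<forall>i j. i + 1 < w \<and> j < h \<longrightarrow> RIGHT (p (i, j)) = LEFT (p (i + 1, j)))
   \<and> (\<forall>i j. i < w \<and> j + 1 < h \<longrightarrow> TOP (p (i, j)) = BOTTOM (p (i, j + 1)))"

definition bottom_labels :: "nat \<Rightarrow> (nat \<times> nat \<Rightarrow> tile) \<Rightarrow> color list" where
  "bottom_labels w p = map (\<lambda>i. BOTTOM (p (i, 0))) [0..<w]"
definition top_labels :: "nat \<Rightarrow> nat \<Rightarrow> (nat \<times> nat \<Rightarrow> tile) \<Rightarrow> color list" where
  "top_labels w h p = map (\<lambda>i. TOP (p (i, h - 1))) [0..<w]"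
definition left_labels :: "nat \<Rightarrow> (nat \<times> nat \<Rightarrow> tile) \<Rightarrow> color list" where
  "left_labels h p = map (\<lambda>j. LEFT (p (0, j))) [0..<h]"
definition right_labels :: "nat \<Rightarrow> nat \<Rightarrow> (nat \<times> nat \<Rightarrow> tile) \<Rightarrow> color list" where
  "right_labels w h p = map (\<lambda>j. RIGHT (p (w - 1, j))) [0..<h]"

definition tile_width :: "nat \<Rightarrow> tile \<Rightarrow> nat" where
  "tile_width n t = length (tau n (BOTTOM t))"
definition tile_height :: "nat \<Rightarrow> tile \<Rightarrow> nat" where
  "tile_height n t = length (tau n (LEFT t))"

definition omega_tile :: "nat \<Rightarrow> tile \<Rightarrow> (nat \<times> nat \<Rightarrow> tile)" where
  "omega_tile n t = (THE p.
      valid_pattern (T'set n) (tile_width n t) (tile_height n t) p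
    \<and> right_labels (tile_width n t) (tile_height n t) p = tau n (RIGHT t)
    \<and> top_labels (tile_width n t) (tile_height n t) p = tau n (TOP t)
    \<and> left_labels (tile_height n t) p = tau n (LEFT t)
    \<and> bottom_labels (tile_width n t) p = tau n (BOTTOM t)
    \<and> (\<forall>i j. \<not> (i < tile_width n t \<and> j < tile_height n t) \<longrightarrow> p (i, j) = undefined))"

definition off :: "(int \<Rightarrow> int) \<Rightarrow> int \<Rightarrow> int" where
  "off w k = (if 0 \<le> k then (\<Sum>i\<in>{0..<k}. w i) else - (\<Sum>i\<in>{k..<0}. w i))"

text \<open>In a configuration all tiles of a column have the same width and all tiles of a row
  the same height; column m1 has width given by x(m1,0), row m2 height given by x(0,m2).\<close>

definition omega_conf :: "nat \<Rightarrow> config \<Rightarrow> config" where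
  "omega_conf n x = (\<lambda>(a, b).
     let W = (\<lambda>m1. int (tile_width n (x (m1, 0))));
         H = (\<lambda>m2. int (tile_height n (x (0, m2))));
         m1 = (THE m1. off W m1 \<le> a \<and> a < off W (m1 + 1));
         m2 = (THE m2. off H m2 \<le> b \<and> b < off H (m2 + 1))
     in omega_tile n (x (m1, m2)) (nat (a - off W m1), nat (b - off H m2)))"

end

theory Submission
  imports Defs
begin

text \<open>
  A configuration of \<open>\<Omega>\<^sub>n\<close> is cut into blocks by its J-tiles: the columns whose bottom colours
  start with \<open>0\<close> and the rows whose left colours start with \<open>0\<close> meet exactly in the J-tiles,
  and consecutive such columns (rows) are at most \<open>n + 2\<close> apart. Between two J-tiles of a row
  lies a strip of tiles from \<open>B\<^sub>n \<union> G\<^sub>n \<union> Y\<^sub>n\<close>, whose bottom colours switch once from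
  \<open>(1, 1, n)\<close> to \<open>(1, 1, n + 1)\<close>; between two strips lie columns of W-tiles, which raise the
  third letter by one per row. Comparing these counts shows that every block has width and height
  \<open>n\<close> or \<open>n + 1\<close> and that its four boundary words are the images under \<open>\<tau>\<^sub>n\<close> of the colours of
  a single tile of \<open>T'\<^sub>n\<close>: a J-tile, a W-tile, a strip tile or a transposed strip tile, according
  to the shape of the block. Since \<open>T'\<^sub>n\<close> is deterministic and \<open>\<tau>\<^sub>n\<close> is injective on
  \<open>V\<^sub>n\<close>, these tiles form a configuration \<open>y \<in> \<Omega>'\<^sub>n\<close>, every block is \<open>\<omega>'\<^sub>n\<close> of its tile,
  and the configuration is a shift of \<open>\<omega>'\<^sub>n(y)\<close>.
\<close>

section \<open>Strictly increasing integer sequences\<close>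

lemma incr_seq_ge:
  fixes X :: "int \<Rightarrow> int"
  assumes incr: "\<And>i. X i < X (i + 1)" and "i \<le> i'"
  shows "X i + (i' - i) \<le> X i'"
  using \<open>i \<le> i'\<close>
proof (induction i' rule: int_ge_induct)
  case (step i')
  then show ?case using incr[of i'] by simp
qed simp

lemma incr_seq_less_iff:
  fixes X :: "int \<Rightarrow> int"
  assumes "\<And>i. X i < X (i + 1)"
  shows "X i < X i' \<longleftrightarrow> i < i'"
  using incr_seq_ge[of X, OF assms, of i i'] incr_seq_ge[of X, OF assms, of i' i] by (cases "i < i'") auto

lemma incr_seq_interval:
  fixes X :: "int \<Rightarrow> int"
  assumes incr: "\<And>i. X i < X (i + 1)"
  shows "\<exists>!i. X i \<le> a \<and> a < X (i + 1)"
proof (rule ex_ex1I)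
  define i0 where "i0 = - int (nat (X 0 - a))"
  have "i0 \<le> 0" "i0 \<le> a - X 0"
    unfolding i0_def by auto
  then have i0: "X i0 \<le> a"
    using incr_seq_ge[of X, OF incr, of i0 0] by simp
  define m0 where "m0 = nat (a - X i0) + 1"
  have "X i0 + (i0 + int m0 - i0) \<le> X (i0 + int m0)"
    by (rule incr_seq_ge[of X, OF incr]) simp
  moreover have "a < X i0 + int m0"
    using i0 unfolding m0_def by simp
  ultimately have ex: "\<exists>m::nat. a < X (i0 + int m)"
    by (intro exI[of _ m0]) simp
  define m where "m = (LEAST m::nat. a < X (i0 + int m))"
  have above: "a < X (i0 + int m)"
    unfolding m_def by (rule LeastI_ex[OF ex])
  then have "m \<noteq> 0"
    using i0 by (cases "m = 0") auto
  then have "\<not> a < X (i0 + int (m - 1))"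
    unfolding m_def by (intro not_less_Least) (simp add: m_def[symmetric])
  then show "\<exists>i. X i \<le> a \<and> a < X (i + 1)"
    using above \<open>m \<noteq> 0\<close> by (intro exI[of _ "i0 + int (m - 1)"]) (simp add: of_nat_diff)
next
  fix i i'
  assume "X i \<le> a \<and> a < X (i + 1)" "X i' \<le> a \<and> a < X (i' + 1)"
  then have "X i < X (i' + 1)" "X i' < X (i + 1)"
    by auto
  then show "i = i'"
    unfolding incr_seq_less_iff[of X, OF incr] by simp
qed

definition succ_in :: "(int \<Rightarrow> bool) \<Rightarrow> int \<Rightarrow> int" where
  "succ_in P a = a + int (LEAST e. 0 < e \<and> P (a + int e))"

definition pred_in :: "(int \<Rightarrow> bool) \<Rightarrow> int \<Rightarrow> int" where
  "pred_in P a = - succ_in (\<lambda>c. P (- c)) (- a)"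

lemma succ_in:
  assumes "\<exists>c > a. P c"
  shows "a < succ_in P a" "P (succ_in P a)" "\<And>c. a < c \<Longrightarrow> P c \<Longrightarrow> succ_in P a \<le> c"
proof -
  obtain c where c: "a < c" "P c"
    using assms by blast
  have ex: "\<exists>e::nat. 0 < e \<and> P (a + int e)"
    using c by (intro exI[of _ "nat (c - a)"]) simp
  show "a < succ_in P a" "P (succ_in P a)"
    using LeastI_ex[OF ex] unfolding succ_in_def by auto
  show "succ_in P a \<le> c" if "a < c" "P c" for c
  proof -
    have "(LEAST e. 0 < e \<and> P (a + int e)) \<le> nat (c - a)"
      using that by (intro Least_le) simp
    then show ?thesis
      using that unfolding succ_in_def by simp
  qed
qed

lemma pred_in:
  assumes "\<exists>c < a. P c"
  shows "pred_in P a < a" "P (pred_in P a)" "\<And>c. c < a \<Longrightarrow> P c \<Longrightarrow> c \<le> pred_in P a"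
proof -
  have "\<exists>c > - a. P (- c)"
    using assms by (metis minus_less_iff minus_minus)
  note s = succ_in[of "- a" "\<lambda>c. P (- c)", OF this]
  show "pred_in P a < a" "P (pred_in P a)"
    using s(1,2) unfolding pred_in_def by auto
  show "c \<le> pred_in P a" if "c < a" "P c" for c
    using s(3)[of "- c"] that unfolding pred_in_def by simp
qed

lemma succ_in_pred_in:
  assumes "\<And>a. \<exists>c > a. P c" "\<And>a. \<exists>c < a. P c" "P a"
  shows "succ_in P (pred_in P a) = a"
proof -
  note p = pred_in[OF assms(2)[of a]] and s = succ_in[OF assms(1)[of "pred_in P a"]]
  have "succ_in P (pred_in P a) \<le> a"
    using p(1) assms(3) by (intro s(3))
  moreover have "\<not> succ_in P (pred_in P a) < a"
    using p(3)[OF _ s(2)] s(1) by fastforce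
  ultimately show ?thesis
    by simp
qed

definition incr_enum :: "(int \<Rightarrow> bool) \<Rightarrow> int \<Rightarrow> int \<Rightarrow> int" where
  "incr_enum P c0 i = (if 0 \<le> i then (succ_in P ^^ nat i) c0 else (pred_in P ^^ nat (- i)) c0)"

lemma incr_enum:
  assumes up: "\<And>a. \<exists>c > a. P c" and down: "\<And>a. \<exists>c < a. P c" and "P c0"
  shows "P (incr_enum P c0 i)" "incr_enum P c0 (i + 1) = succ_in P (incr_enum P c0 i)"
proof -
  have "P ((succ_in P ^^ m) c0)" "P ((pred_in P ^^ m) c0)" for m
    using \<open>P c0\<close> succ_in(2)[OF up] pred_in(2)[OF down] by (induction m) auto
  then show P: "P (incr_enum P c0 i)" for i
    unfolding incr_enum_def by simp
  consider "0 \<le> i" | "i = - 1" | "i < - 1"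
    by linarith
  then show "incr_enum P c0 (i + 1) = succ_in P (incr_enum P c0 i)"
  proof cases
    case 1
    then have "nat (i + 1) = Suc (nat i)"
      by simp
    then show ?thesis
      using 1 unfolding incr_enum_def by simp
  next
    case 2
    then show ?thesis
      using succ_in_pred_in[OF up down \<open>P c0\<close>] unfolding incr_enum_def by simp
  next
    case 3
    then have "nat (- i) = Suc (nat (- (i + 1)))"
      by simp
    then have "incr_enum P c0 i = pred_in P (incr_enum P c0 (i + 1))"
      using 3 unfolding incr_enum_def by simp
    then show ?thesis
      using succ_in_pred_in[OF up down P] by simp
  qed
qed

lemma incr_seq_enumerate:
  fixes P :: "int \<Rightarrow> bool"
  assumes up: "\<And>a. \<exists>c > a. P c" and down: "\<And>a. \<exists>c < a. P c"
  shows "\<exists>X :: int \<Rightarrow> int. (\<forall>i. X i < X (i + 1)) \<and> (\<forall>c. P c \<longleftrightarrow> (\<exists>i. X i = c))"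
proof -
  obtain c0 where "P c0"
    using up by blast
  define X where "X = incr_enum P c0"
  note X = incr_enum[OF up down \<open>P c0\<close>, folded X_def]
  have incr: "X i < X (i + 1)" for i
    unfolding X(2) by (rule succ_in(1)[OF up])
  have "\<exists>i. X i = c" if "P c" for c
  proof -
    obtain i where i: "X i \<le> c" "c < X (i + 1)"
      using incr_seq_interval[of X, OF incr, of c] by blast
    have "\<not> X i < c"
      using succ_in(3)[OF up _ that] i(2) unfolding X(2) by fastforce
    then show ?thesis
      using i(1) by auto
  qed
  then show ?thesis
    using incr X(1) by (intro exI[of _ X]) blast
qed

lemma off_succ: "off W (m + 1) = off W m + W m"
proof -
  consider "0 \<le> m" | "m = - 1" | "m < - 1"
    by linarith
  then show ?thesis
  proof cases
    case 1
    then have "{0..<m + 1} = insert m {0..<m}"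
      by auto
    then show ?thesis
      using 1 unfolding off_def by simp
  next
    case 2
    then have "{- 1..<0 :: int} = {- 1}"
      by auto
    then show ?thesis
      using 2 unfolding off_def by simp
  next
    case 3
    then have "{m..<0} = insert m {m + 1..<0}"
      by auto
    then show ?thesis
      using 3 unfolding off_def by simp
  qed
qed

lemma off_telescope:
  fixes W X :: "int \<Rightarrow> int"
  assumes "\<And>m. W m = X (m + 1) - X m"
  shows "off W m = X m - X 0"
proof (induction m rule: int_induct[where k = 0])
  case (step1 i)
  then show ?case using off_succ[of W i] assms[of i] by simp
next
  case (step2 i)
  then show ?case using off_succ[of W "i - 1"] assms[of "i - 1"] by simp
qed (simp add: off_def)

lemma mono_chain:
  fixes g :: "int \<Rightarrow> int"
  assumes "\<And>p. lo \<le> p \<Longrightarrow> p + 1 < hi \<Longrightarrow> g p \<le> g (p + 1)" "lo \<le> p" "p \<le> q" "q < hi"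
  shows "g p \<le> g q"
  using assms(3,4)
proof (induction q rule: int_ge_induct)
  case (step q)
  then show ?case using assms(1)[of q] assms(2) by fastforce
qed simp

lemma mono_01_step:
  fixes g :: "int \<Rightarrow> int"
  assumes mono: "\<And>p. 1 \<le> p \<Longrightarrow> p + 1 < w \<Longrightarrow> g p \<le> g (p + 1)"
    and range01: "\<And>p. 1 \<le> p \<Longrightarrow> p < w \<Longrightarrow> g p \<in> {0, 1}" and "1 \<le> w"
  shows "\<exists>\<sigma>. 1 \<le> \<sigma> \<and> \<sigma> \<le> w \<and> (\<forall>p. 1 \<le> p \<longrightarrow> p < w \<longrightarrow> g p = (if \<sigma> \<le> p then 1 else 0))"
proof -
  define U where "U = {p \<in> {1..<w}. g p = 1}"
  define \<sigma> where "\<sigma> = (if U = {} then w else Min U)"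
  have fin: "finite U"
    unfolding U_def by (rule finite_subset[of _ "{1..<w}"]) auto
  have \<sigma>_in: "U \<noteq> {} \<Longrightarrow> \<sigma> \<in> U"
    using Min_in[OF fin] unfolding \<sigma>_def by simp
  have "1 \<le> \<sigma> \<and> \<sigma> \<le> w"
  proof (cases "U = {}")
    case True
    then show ?thesis
      using \<open>1 \<le> w\<close> unfolding \<sigma>_def by simp
  next
    case False
    then show ?thesis
      using \<sigma>_in unfolding U_def by auto
  qed
  moreover have "g p = (if \<sigma> \<le> p then 1 else 0)" if "1 \<le> p" "p < w" for p
  proof (cases "\<sigma> \<le> p")
    case True
    then have "U \<noteq> {}"
      using \<open>p < w\<close> unfolding \<sigma>_def by (cases "U = {}") auto
    then have "\<sigma> \<in> U"
      by (rule \<sigma>_in)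
    then have "g \<sigma> \<le> g p"
      using True that unfolding U_def by (intro mono_chain[of 1 w g, OF mono]) auto
    then show ?thesis
      using True range01[OF that] \<open>\<sigma> \<in> U\<close> unfolding U_def by auto
  next
    case False
    then have "p \<notin> U"
      using Min_le[OF fin, of p] that unfolding \<sigma>_def by (auto split: if_splits)
    then show ?thesis
      using False range01[OF that] that unfolding U_def by auto
  qed
  ultimately show ?thesis
    by blast
qed

section \<open>Rectangular patterns over a deterministic tile set\<close>

lemma valid_pattern_unique:
  assumes det: "\<And>t t'. t \<in> T \<Longrightarrow> t' \<in> T \<Longrightarrow> LEFT t = LEFT t' \<Longrightarrow> BOTTOM t = BOTTOM t' \<Longrightarrow> t = t'"
    and p: "valid_pattern T w h p" and q: "valid_pattern T w h q"
    and left: "left_labels h p = left_labels h q" and bottom: "bottom_labels w p = bottom_labels w q"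
  shows "i < w \<Longrightarrow> j < h \<Longrightarrow> p (i, j) = q (i, j)"
proof (induction "i + j" arbitrary: i j rule: less_induct)
  case less
  have "LEFT (p (i, j)) = LEFT (q (i, j))"
  proof (cases i)
    case 0
    then show ?thesis
      using arg_cong[OF left, of "\<lambda>xs. xs ! j"] less.prems unfolding left_labels_def by simp
  next
    case (Suc i')
    then have "p (i', j) = q (i', j)"
      using less by simp
    then show ?thesis
      using p q less.prems Suc unfolding valid_pattern_def by (metis Suc_eq_plus1)
  qed
  moreover have "BOTTOM (p (i, j)) = BOTTOM (q (i, j))"
  proof (cases j)
    case 0
    then show ?thesis
      using arg_cong[OF bottom, of "\<lambda>xs. xs ! i"] less.prems unfolding bottom_labels_def by simp
  next
    case (Suc j')
    then have "p (i, j') = q (i, j')"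
      using less by simp
    then show ?thesis
      using p q less.prems Suc unfolding valid_pattern_def by (metis Suc_eq_plus1)
  qed
  ultimately show ?case
    using det p q less.prems unfolding valid_pattern_def by blast
qed

definition tau_word :: "nat \<Rightarrow> int \<Rightarrow> int \<Rightarrow> nat \<Rightarrow> nat \<Rightarrow> color list" where
  "tau_word n a b m1 m2 = (0, a, b) # replicate m1 (1, 1, int n) @ replicate m2 (1, 1, int n + 1)"

lemma replicate_append_replicate_eq_iff:
  assumes "u \<noteq> v"
  shows "replicate m1 u @ replicate m2 v = replicate m1' u @ replicate m2' v \<longleftrightarrow> m1 = m1' \<and> m2 = m2'"
  using assms
proof (induction m1 arbitrary: m1')
  case 0
  then show ?case by (cases m1'; cases m2) (auto dest: arg_cong[where f = length])
next
  case (Suc m)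
  then show ?case by (cases m1'; cases m2'; cases m2) auto
qed

lemma tau_word_eq_iff:
  "tau_word n a b m1 m2 = tau_word n a' b' m1' m2' \<longleftrightarrow> a = a' \<and> b = b' \<and> m1 = m1' \<and> m2 = m2'"
  unfolding tau_word_def by (auto simp: replicate_append_replicate_eq_iff)

lemma length_tau_word: "length (tau_word n a b m1 m2) = 1 + m1 + m2"
  unfolding tau_word_def by simp

lemma tau_eq_tau_word:
  "tau n (x, y, z) = (if x \<noteq> z then tau_word n (x - y + 1) (int n) (nat (z - x - 1)) (nat (int n + 1 - z))
     else tau_word n (x - y + 1) (int n + 1) 0 (nat (int n - z)))"
  unfolding tau_def tau_word_def by auto

section \<open>The tile sets\<close>

lemma tile_sides [simp]:
  "RIGHT (a, b, c, d) = a" "TOP (a, b, c, d) = b" "LEFT (a, b, c, d) = c" "BOTTOM (a, b, c, d) = d"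
  by (simp_all add: RIGHT_def TOP_def LEFT_def BOTTOM_def)

lemma tile_eqI:
  "RIGHT t = RIGHT t' \<Longrightarrow> TOP t = TOP t' \<Longrightarrow> LEFT t = LEFT t' \<Longrightarrow> BOTTOM t = BOTTOM t' \<Longrightarrow> t = t'"
  unfolding RIGHT_def TOP_def LEFT_def BOTTOM_def by (simp add: prod_eq_iff)

lemma hat_hat [simp]: "hat (hat t) = t"
  unfolding hat_def by (auto split: prod.splits)

lemma hat_sides [simp]:
  "RIGHT (hat t) = TOP t" "TOP (hat t) = RIGHT t" "LEFT (hat t) = BOTTOM t" "BOTTOM (hat t) = LEFT t"
  unfolding hat_def RIGHT_def TOP_def LEFT_def BOTTOM_def by (auto split: prod.splits)

definition wtile :: "int \<Rightarrow> int \<Rightarrow> tile" where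
  "wtile i j = ((1, 1, i + 1), (1, 1, j + 1), (1, 1, i), (1, 1, j))"

definition strip_tile :: "nat \<Rightarrow> int \<Rightarrow> int \<Rightarrow> int \<Rightarrow> tile" where
  "strip_tile n b c i = ((0, c, i + 1), (1, 1, 1 + b), (0, b, i), (1, 1, int n + c))"

definition strip_index' :: "nat \<Rightarrow> int \<Rightarrow> int \<Rightarrow> int \<Rightarrow> bool" where
  "strip_index' n b c i \<longleftrightarrow> b \<in> {0, 1} \<and> c \<in> {0, 1} \<and> 0 \<le> i \<and> i \<le> int n \<and> (b = 1 \<longrightarrow> 1 \<le> i)"

definition strip_index :: "nat \<Rightarrow> int \<Rightarrow> int \<Rightarrow> int \<Rightarrow> bool" where
  "strip_index n b c i \<longleftrightarrow> strip_index' n b c i \<and> b \<le> c \<and> (c = 0 \<longrightarrow> i < int n)"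

definition J_params :: "int \<Rightarrow> int \<Rightarrow> int \<Rightarrow> int \<Rightarrow> bool" where
  "J_params k l r s \<longleftrightarrow> (k, l) \<in> Jpairs \<and> (r, s) \<in> Jpairs \<and> (k, l, r, s) \<notin> {(0, 0, 1, 1), (1, 1, 0, 0)}"

lemma Wset_eq: "Wset n = {wtile i j | i j. 1 \<le> i \<and> i \<le> int n \<and> 1 \<le> j \<and> j \<le> int n}"
  unfolding Wset_def wtile_def by blast

lemma strip_sets_eq':
  "B'set n \<union> Gset n \<union> Yset n \<union> Aset n = {strip_tile n b c i | b c i. strip_index' n b c i}"
  unfolding B'set_def Gset_def Yset_def Aset_def btile_def strip_tile_def strip_index'_def
  by auto

lemma strip_sets_eq:
  "Bset n \<union> Gset n \<union> Yset n = {strip_tile n b c i | b c i. strip_index n b c i}"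
  unfolding Bset_def Gset_def Yset_def btile_def strip_tile_def strip_index_def strip_index'_def
  by auto

lemma Jset_eq: "Jset n = {jtile n k l r s | k l r s. J_params k l r s}"
  unfolding Jset_def J'set_def J_params_def jtile_def by auto

lemma Jpairs_iff: "(a, b) \<in> Jpairs \<longleftrightarrow> a \<in> {0, 1} \<and> b \<in> {0, 1} \<and> a \<le> b"
  unfolding Jpairs_def by auto

lemma J_params_cases: "J_params k l r s \<Longrightarrow> k \<in> {0, 1} \<and> l \<in> {0, 1} \<and> r \<in> {0, 1} \<and> s \<in> {0, 1} \<and> k \<le> l \<and> r \<le> s"
  unfolding J_params_def Jpairs_def by auto

definition jk :: "tile \<Rightarrow> int" where "jk t = fst (snd (RIGHT t))"
definition jl :: "tile \<Rightarrow> int" where "jl t = snd (snd (RIGHT t))"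
definition jr :: "tile \<Rightarrow> int" where "jr t = fst (snd (TOP t))"
definition js :: "tile \<Rightarrow> int" where "js t = snd (snd (TOP t))"

lemma jtile_params [simp]:
  "jk (jtile n k l r s) = k" "jl (jtile n k l r s) = l" "jr (jtile n k l r s) = r" "js (jtile n k l r s) = s"
  unfolding jk_def jl_def jr_def js_def jtile_def by simp_all

lemma hat_params [simp]: "jk (hat t) = jr t" "jl (hat t) = js t" "jr (hat t) = jk t" "js (hat t) = jl t"
  unfolding jk_def jl_def jr_def js_def by simp_all

lemma wtile_in_T'set: "1 \<le> i \<Longrightarrow> i \<le> int n \<Longrightarrow> 1 \<le> j \<Longrightarrow> j \<le> int n \<Longrightarrow> wtile i j \<in> T'set n"
  unfolding T'set_def Wset_eq by blast

lemma strip_tile_in_T'set: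
  "strip_index' n b c i \<Longrightarrow> strip_tile n b c i \<in> T'set n"
  "strip_index' n b c i \<Longrightarrow> hat (strip_tile n b c i) \<in> T'set n"
  using strip_sets_eq'[of n] unfolding T'set_def by blast+

lemma jtile_in_T'set: "(k, l) \<in> Jpairs \<Longrightarrow> (r, s) \<in> Jpairs \<Longrightarrow> jtile n k l r s \<in> T'set n"
  unfolding T'set_def J'set_def by blast

lemma Tset_subset_T'set: "Tset n \<subseteq> T'set n"
proof -
  have "Bset n \<subseteq> B'set n" "Jset n \<subseteq> J'set n"
    unfolding Bset_def B'set_def Jset_def by auto
  moreover have "hat ` Bset n \<subseteq> hat ` B'set n"
    using calculation(1) by (rule image_mono)
  ultimately show ?thesis
    unfolding Tset_def T'set_def by (intro Un_least; blast)
qed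

lemma Tset_cases [consumes 1, case_names W strip hat_strip J]:
  assumes "t \<in> Tset n"
  obtains i j where "t = wtile i j" "1 \<le> i" "i \<le> int n" "1 \<le> j" "j \<le> int n"
  | b c i where "t = strip_tile n b c i" "strip_index n b c i"
  | b c i where "t = hat (strip_tile n b c i)" "strip_index n b c i"
  | k l r s where "t = jtile n k l r s" "J_params k l r s"
proof -
  have "t \<in> Wset n \<or> t \<in> Bset n \<union> Gset n \<union> Yset n \<or> t \<in> hat ` (Bset n \<union> Gset n \<union> Yset n) \<or> t \<in> Jset n"
    using assms unfolding Tset_def by blast
  then show thesis
    unfolding Wset_eq strip_sets_eq Jset_eq using that by blast
qed

lemma hat_wtile: "hat (wtile i j) = wtile j i"
  unfolding hat_def wtile_def by simp

lemma hat_jtile: "hat (jtile n k l r s) = jtile n r s k l"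
  unfolding hat_def jtile_def by simp

lemma hat_in_Tset:
  assumes "t \<in> Tset n"
  shows "hat t \<in> Tset n"
  using assms
proof (cases rule: Tset_cases)
  case (W i j)
  then show ?thesis
    unfolding Tset_def Wset_eq by (auto simp: hat_wtile)
next
  case (strip b c i)
  then have "hat t \<in> hat ` (Bset n \<union> Gset n \<union> Yset n)"
    unfolding strip_sets_eq by blast
  then show ?thesis
    unfolding Tset_def by blast
next
  case (hat_strip b c i)
  then have "hat t \<in> Bset n \<union> Gset n \<union> Yset n"
    unfolding strip_sets_eq by auto
  then show ?thesis
    unfolding Tset_def by blast
next
  case (J k l r s)
  then have "J_params r s k l"
    unfolding J_params_def by auto
  then show ?thesis
    unfolding Tset_def Jset_eq J(1) hat_jtile by blast
qed

lemma Tset_first_letters: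
  assumes "t \<in> Tset n"
  shows "fst (RIGHT t) = fst (LEFT t)" "fst (TOP t) = fst (BOTTOM t)"
    and "fst (LEFT t) \<in> {0, 1}" "fst (BOTTOM t) \<in> {0, 1}"
  using assms by (cases rule: Tset_cases; simp add: wtile_def strip_tile_def jtile_def)+

lemma Tset_J_tile:
  assumes "t \<in> Tset n" "fst (LEFT t) = 0" "fst (BOTTOM t) = 0"
  obtains k l r s where "t = jtile n k l r s" "J_params k l r s"
  using assms by (cases rule: Tset_cases) (auto simp: wtile_def strip_tile_def)

lemma Tset_strip_tile:
  assumes "t \<in> Tset n" "fst (LEFT t) = 0" "fst (BOTTOM t) \<noteq> 0"
  obtains b c i where "t = strip_tile n b c i" "strip_index n b c i"
  using assms by (cases rule: Tset_cases) (auto simp: wtile_def strip_tile_def jtile_def)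

lemma Tset_wtile:
  assumes "t \<in> Tset n" "fst (LEFT t) \<noteq> 0" "fst (BOTTOM t) \<noteq> 0"
  obtains i j where "t = wtile i j" "1 \<le> i" "i \<le> int n" "1 \<le> j" "j \<le> int n"
  using assms by (cases rule: Tset_cases) (auto simp: strip_tile_def jtile_def)

section \<open>Determinism of \<open>T'\<^sub>n\<close>\<close>

definition in_V :: "nat \<Rightarrow> color \<Rightarrow> bool" where
  "in_V n c \<longleftrightarrow> (case c of (x, y, z) \<Rightarrow> 0 \<le> x \<and> x \<le> y \<and> y \<le> 1 \<and> y \<le> z \<and> z \<le> int n + 1)"

definition right_of :: "nat \<Rightarrow> color \<Rightarrow> color \<Rightarrow> color" where
  "right_of n L B =
     (if fst L = 1 then (if fst B = 1 then (1, 1, snd (snd L) + 1) else (1, 1, 1 + fst (snd B)))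
      else (0, snd (snd B) - int n, if fst B = 1 then snd (snd L) + 1 else fst (snd B)))"

definition top_of :: "nat \<Rightarrow> color \<Rightarrow> color \<Rightarrow> color" where
  "top_of n L B =
     (if fst B = 1 then (if fst L = 1 then (1, 1, snd (snd B) + 1) else (1, 1, 1 + fst (snd L)))
      else (0, snd (snd L) - int n, if fst L = 1 then snd (snd B) + 1 else fst (snd L)))"

definition obeys_local_rule :: "nat \<Rightarrow> tile \<Rightarrow> bool" where
  "obeys_local_rule n t \<longleftrightarrow>
     RIGHT t = right_of n (LEFT t) (BOTTOM t) \<and> TOP t = top_of n (LEFT t) (BOTTOM t)
     \<and> in_V n (RIGHT t) \<and> in_V n (TOP t) \<and> in_V n (LEFT t) \<and> in_V n (BOTTOM t)"

lemma obeys_local_rule_wtile: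
  "1 \<le> i \<Longrightarrow> i \<le> int n \<Longrightarrow> 1 \<le> j \<Longrightarrow> j \<le> int n \<Longrightarrow> obeys_local_rule n (wtile i j)"
  by (simp add: obeys_local_rule_def wtile_def right_of_def top_of_def in_V_def)

lemma obeys_local_rule_strip_tile:
  assumes "strip_index' n b c i" "1 \<le> n"
  shows "obeys_local_rule n (strip_tile n b c i)" "obeys_local_rule n (hat (strip_tile n b c i))"
  using assms by (auto simp: obeys_local_rule_def strip_index'_def strip_tile_def hat_def
      right_of_def top_of_def in_V_def)

lemma obeys_local_rule_jtile:
  "(k, l) \<in> Jpairs \<Longrightarrow> (r, s) \<in> Jpairs \<Longrightarrow> 1 \<le> n \<Longrightarrow> obeys_local_rule n (jtile n k l r s)"
  by (auto simp: obeys_local_rule_def jtile_def Jpairs_def right_of_def top_of_def in_V_def)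

lemma T'set_cases [consumes 1, case_names W strip hat_strip J]:
  assumes "t \<in> T'set n"
  obtains i j where "t = wtile i j" "1 \<le> i" "i \<le> int n" "1 \<le> j" "j \<le> int n"
  | b c i where "t = strip_tile n b c i" "strip_index' n b c i"
  | b c i where "t = hat (strip_tile n b c i)" "strip_index' n b c i"
  | k l r s where "t = jtile n k l r s" "(k, l) \<in> Jpairs" "(r, s) \<in> Jpairs"
proof -
  have "t \<in> Wset n \<or> t \<in> B'set n \<union> Gset n \<union> Yset n \<union> Aset n
      \<or> t \<in> hat ` (B'set n \<union> Gset n \<union> Yset n \<union> Aset n) \<or> t \<in> J'set n"
    using assms unfolding T'set_def by blast
  then show thesis
    unfolding Wset_eq strip_sets_eq' J'set_def using that by blast
qed

lemma hat_in_T'set: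
  assumes "t \<in> T'set n"
  shows "hat t \<in> T'set n"
  using assms
proof (cases rule: T'set_cases)
  case (W i j)
  then show ?thesis by (simp add: hat_wtile wtile_in_T'set)
next
  case (strip b c i)
  then show ?thesis by (simp add: strip_tile_in_T'set)
next
  case (hat_strip b c i)
  then show ?thesis by (simp add: strip_tile_in_T'set)
next
  case (J k l r s)
  then show ?thesis by (simp add: hat_jtile jtile_in_T'set)
qed

lemma T'set_local_rule:
  assumes "t \<in> T'set n" "1 \<le> n"
  shows "obeys_local_rule n t"
  using assms(1)
proof (cases rule: T'set_cases)
  case (W i j)
  then show ?thesis by (simp add: obeys_local_rule_wtile)
next
  case (strip b c i)
  then show ?thesis using assms(2) by (simp add: obeys_local_rule_strip_tile)
next
  case (hat_strip b c i)
  then show ?thesis using assms(2) by (simp add: obeys_local_rule_strip_tile)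
next
  case (J k l r s)
  then show ?thesis using assms(2) by (simp add: obeys_local_rule_jtile)
qed

lemma T'set_deterministic:
  assumes "t \<in> T'set n" "t' \<in> T'set n" "1 \<le> n" "LEFT t = LEFT t'" "BOTTOM t = BOTTOM t'"
  shows "t = t'"
  using T'set_local_rule[OF assms(1,3)] T'set_local_rule[OF assms(2,3)] assms(4,5)
  unfolding obeys_local_rule_def by (intro tile_eqI) simp_all

lemma inj_on_tau:
  assumes "1 \<le> n"
  shows "inj_on (tau n) {c. in_V n c}"
proof (rule inj_onI)
  fix c c'
  assume V: "c \<in> {c. in_V n c}" "c' \<in> {c. in_V n c}" and eq: "tau n c = tau n c'"
  obtain x y z x' y' z' where c: "c = (x, y, z)" "c' = (x', y', z')"
    by (metis prod_cases3)
  have "length (tau n c) = nat (int n + 1 - x)" "length (tau n c') = nat (int n + 1 - x')"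
    using assms V unfolding c by (auto simp: tau_eq_tau_word length_tau_word in_V_def)
  then have "x = x'"
    using eq V unfolding c by (auto simp: in_V_def)
  then show "c = c'"
    using eq V unfolding c by (auto simp: tau_eq_tau_word tau_word_eq_iff in_V_def split: if_splits)
qed

section \<open>Realising a block by a tile of \<open>T'\<^sub>n\<close>\<close>

text \<open>A horizontal strip of width \<open>w\<close> running from a J-tile with right colour \<open>(0, k, l)\<close> to a
  J-tile with left colour \<open>(0, s', r' + n)\<close>: the strip tiles in between carry the bottom colour
  \<open>(1, 1, n)\<close> before position \<open>\<sigma>\<close> and \<open>(1, 1, n + 1)\<close> from there on.\<close>

definition strip_shape :: "nat \<Rightarrow> int \<Rightarrow> int \<Rightarrow> int \<Rightarrow> int \<Rightarrow> int \<Rightarrow> int \<Rightarrow> bool" where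
  "strip_shape n k l r' s' \<sigma> w \<longleftrightarrow> w = int n + 1 + r' - l \<and> 1 \<le> \<sigma> \<and> \<sigma> \<le> w \<and> \<sigma> \<le> int n + 1 - l
     \<and> (k = 1 \<longrightarrow> \<sigma> = 1) \<and> s' = (if k = 1 \<or> \<sigma> < w then 1 else 0)"

text \<open>The position from which the same strip carries the top colour \<open>(1, 1, 2)\<close> instead of
  \<open>(1, 1, 1)\<close>.\<close>

definition top_switch :: "int \<Rightarrow> int \<Rightarrow> int \<Rightarrow> int" where
  "top_switch k \<sigma> w = (if k = 1 then 1 else min w (\<sigma> + 1))"

text \<open>Two strips of width \<open>w\<close> stacked at vertical distance \<open>h\<close>, with W-columns in between: every
  column raises the third letter by \<open>h - 1\<close>, which forces this relation between the switches.\<close>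

definition stacked_switches :: "nat \<Rightarrow> int \<Rightarrow> int \<Rightarrow> int \<Rightarrow> int \<Rightarrow> int \<Rightarrow> bool" where
  "stacked_switches n k \<sigma> \<sigma>' w h \<longleftrightarrow> (2 \<le> w \<longrightarrow>
     (h = int n + 1 \<and> top_switch k \<sigma> w = w \<and> \<sigma>' = 1) \<or> (h = int n \<and> top_switch k \<sigma> w = \<sigma>'))"

lemma stacked_switches_solution:
  fixes w a b h :: int
  assumes "2 \<le> w" "1 \<le> a" "a \<le> w" "1 \<le> b" "b \<le> w" "int n \<le> h"
    and columns: "\<And>p. 1 \<le> p \<Longrightarrow> p \<le> w - 1 \<Longrightarrow> h = int n + (if b \<le> p then 1 else 0) - (if a \<le> p then 1 else 0)"
  shows "(h = int n + 1 \<and> a = w \<and> b = 1) \<or> (h = int n \<and> a = b)"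
proof (cases "h = int n + 1")
  case True
  then show ?thesis
    using columns[of 1] columns[of "w - 1"] assms(1-5) by (auto split: if_splits)
next
  case False
  then have "h = int n"
    using columns[of 1] assms(1-6) by (auto split: if_splits)
  moreover have "a = b"
  proof (rule ccontr)
    assume "a \<noteq> b"
    then consider "a < b" | "b < a"
      by linarith
    then show False
      using columns[of a] columns[of b] assms(2-5) \<open>h = int n\<close> by cases (auto split: if_splits)
  qed
  ultimately show ?thesis
    by simp
qed

text \<open>The four J-tiles at the corners of a block and the four strips joining them, with switches
  \<open>\<sigma>\<close> (bottom), \<open>\<sigma>'\<close> (top), \<open>\<tau>\<close> (left) and \<open>\<tau>'\<close> (right). The colours \<open>(k, l)\<close>, \<open>(r, s)\<close>
  belong to the lower left corner, \<open>(r2, s2)\<close> to the lower right, \<open>(k3, l3)\<close> to the upper left and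
  \<open>(k4, l4)\<close>, \<open>(r4, s4)\<close> to the upper right corner.\<close>

locale block_frame =
  fixes n :: nat and k l r s r2 s2 k3 l3 k4 l4 r4 s4 \<sigma> \<sigma>' \<tau> \<tau>' w h :: int
  assumes n_pos: "1 \<le> n"
    and pairs: "(k, l) \<in> Jpairs" "(r, s) \<in> Jpairs" "(r2, s2) \<in> Jpairs"
      "(k3, l3) \<in> Jpairs" "(k4, l4) \<in> Jpairs" "(r4, s4) \<in> Jpairs"
    and strip_bottom: "strip_shape n k l r2 s2 \<sigma> w" and strip_top: "strip_shape n k3 l3 r4 s4 \<sigma>' w"
    and strip_left: "strip_shape n r s k3 l3 \<tau> h" and strip_right: "strip_shape n r2 s2 k4 l4 \<tau>' h"
    and vertical: "stacked_switches n k \<sigma> \<sigma>' w h" and horizontal: "stacked_switches n r \<tau> \<tau>' h w"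
    and width: "w = int n \<or> w = int n + 1" and height: "h = int n \<or> h = int n + 1"
begin

lemma kl: "k \<in> {0, 1}" "l \<in> {0, 1}" "k \<le> l" and rs: "r \<in> {0, 1}" "s \<in> {0, 1}" "r \<le> s"
  and rs2: "r2 \<in> {0, 1}" "s2 \<in> {0, 1}" "r2 \<le> s2" and kl3: "k3 \<in> {0, 1}" "l3 \<in> {0, 1}" "k3 \<le> l3"
  and kl4: "k4 \<in> {0, 1}" "l4 \<in> {0, 1}" "k4 \<le> l4" and rs4: "r4 \<in> {0, 1}" "s4 \<in> {0, 1}" "r4 \<le> s4"
  using pairs unfolding Jpairs_iff by auto

definition realises :: "tile \<Rightarrow> bool" where
  "realises t \<longleftrightarrow> t \<in> T'set n
     \<and> tau n (BOTTOM t) = tau_word n l (k + int n) (nat (\<sigma> - 1)) (nat (w - \<sigma>))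
     \<and> tau n (LEFT t) = tau_word n s (r + int n) (nat (\<tau> - 1)) (nat (h - \<tau>))
     \<and> tau n (TOP t) = tau_word n l3 (k3 + int n) (nat (\<sigma>' - 1)) (nat (w - \<sigma>'))
     \<and> tau n (RIGHT t) = tau_word n s2 (r2 + int n) (nat (\<tau>' - 1)) (nat (h - \<tau>'))"

definition realises_rows :: "tile \<Rightarrow> bool" where
  "realises_rows t \<longleftrightarrow>
     tau n (BOTTOM t) = tau_word n l (k + int n) (nat (\<sigma> - 1)) (nat (w - \<sigma>))
     \<and> tau n (TOP t) = tau_word n l3 (k3 + int n) (nat (\<sigma>' - 1)) (nat (w - \<sigma>'))"

lemma realises_rows_jtile:
  assumes "w = int n + 1" "h = int n + 1"
  shows "realises_rows (jtile n (1 - s2) (1 - l) (1 - l3) (1 - s))"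
proof -
  have k0: "k = 0" and \<sigma>: "w - 1 \<le> \<sigma>" and \<sigma>': "\<sigma>' = 1"
    using vertical assms n_pos kl(1) unfolding stacked_switches_def top_switch_def by (auto split: if_splits)
  have s2: "s2 = (if \<sigma> < w then 1 else 0)" "\<sigma> \<le> w" and "s = k3"
    using strip_bottom strip_left k0 assms unfolding strip_shape_def by auto
  let ?t = "jtile n (1 - s2) (1 - l) (1 - l3) (1 - s)"
  have bottom: "tau n (BOTTOM ?t) = tau_word n l (int n) (nat (int n - s2)) (nat s2)"
    using n_pos rs2(2) by (auto simp: jtile_def tau_eq_tau_word)
  have top: "tau n (TOP ?t) = tau_word n l3 (int n + s) 0 n"
    using n_pos rs(2) by (auto simp: jtile_def tau_eq_tau_word)
  show ?thesis
    unfolding realises_rows_def bottom top tau_word_eq_iff using k0 \<sigma> \<sigma>' s2 \<open>s = k3\<close> assms by auto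
qed

lemma realises_rows_wtile:
  assumes "w = int n" "h = int n"
  defines "d \<equiv> if k = 1 then 1 else \<sigma> + 1"
  shows "1 \<le> d" "d \<le> int n" "realises_rows (wtile a d)"
proof -
  have l1: "l = 1" "r2 = 0" "l3 = 1"
    using strip_bottom strip_top kl(2) rs2(1) kl3(2) rs4(1) assms unfolding strip_shape_def by auto
  have s1: "k3 = 0" "s2 = 1"
    using strip_left strip_right rs(2) kl3(1) rs2(2) kl4(1) assms unfolding strip_shape_def by auto
  have \<sigma>w: "k = 0 \<Longrightarrow> \<sigma> < w" "1 \<le> \<sigma>" "k = 1 \<Longrightarrow> \<sigma> = 1" "1 \<le> \<sigma>'" "\<sigma>' \<le> w"
    using strip_bottom strip_top s1 unfolding strip_shape_def by (auto split: if_splits)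
  show d: "1 \<le> d" "d \<le> int n"
    using \<sigma>w kl(1) assms unfolding d_def by auto
  have "\<sigma>' = d"
  proof (cases "2 \<le> w")
    case True
    then have "top_switch k \<sigma> w = \<sigma>'"
      using vertical assms unfolding stacked_switches_def by auto
    then show ?thesis
      using \<sigma>w kl(1) unfolding top_switch_def d_def by auto
  next
    case False
    then show ?thesis
      using \<sigma>w kl(1) assms unfolding d_def by auto
  qed
  moreover have "tau n (BOTTOM (wtile a d)) = tau_word n l (k + int n) (nat (\<sigma> - 1)) (nat (w - \<sigma>))"
    using \<sigma>w l1 d kl(1) unfolding d_def assms
    by (cases "k = 1") (auto simp: wtile_def tau_eq_tau_word tau_word_eq_iff)
  ultimately show "realises_rows (wtile a d)"
    unfolding realises_rows_def using d l1 s1 assms by (auto simp: wtile_def tau_eq_tau_word tau_word_eq_iff)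
qed

lemma realises_rows_strip_tile:
  assumes "w = int n" "h = int n + 1"
  shows "realises_rows (strip_tile n (1 - s) (if k = 1 then 0 else \<sigma> - int n + 1) i)"
proof -
  have l1: "l = 1" "l3 = 1"
    using strip_bottom strip_top kl(2) rs2(1) kl3(2) rs4(1) assms unfolding strip_shape_def by auto
  have "s = k3"
    using strip_left assms unfolding strip_shape_def by auto
  have \<sigma>w: "1 \<le> \<sigma>" "\<sigma> \<le> w" "k = 1 \<Longrightarrow> \<sigma> = 1" "1 \<le> \<sigma>'" "\<sigma>' \<le> w"
    using strip_bottom strip_top unfolding strip_shape_def by auto
  have vert: "\<sigma>' = 1 \<and> (k = 1 \<longrightarrow> n = 1) \<and> (k = 0 \<longrightarrow> \<sigma> \<ge> w - 1)"
  proof (cases "2 \<le> w")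
    case True
    then have "top_switch k \<sigma> w = w" "\<sigma>' = 1"
      using vertical assms unfolding stacked_switches_def by auto
    then show ?thesis
      using \<sigma>w kl(1) True unfolding top_switch_def by (auto split: if_splits)
  next
    case False
    then show ?thesis
      using \<sigma>w kl(1) assms n_pos by auto
  qed
  have "tau n (BOTTOM (strip_tile n (1 - s) (if k = 1 then 0 else \<sigma> - int n + 1) i)) =
      tau_word n l (k + int n) (nat (\<sigma> - 1)) (nat (w - \<sigma>))"
    using \<sigma>w l1 vert kl(1) assms unfolding strip_tile_def
    by (cases "k = 1") (auto simp: tau_eq_tau_word tau_word_eq_iff)
  moreover have "tau n (TOP (strip_tile n (1 - s) (if k = 1 then 0 else \<sigma> - int n + 1) i)) =
      tau_word n l3 (k3 + int n) (nat (\<sigma>' - 1)) (nat (w - \<sigma>'))"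
    using vert l1 \<open>s = k3\<close> \<sigma>w rs(2) assms unfolding strip_tile_def
    by (auto simp: tau_eq_tau_word tau_word_eq_iff)
  ultimately show ?thesis
    unfolding realises_rows_def ..
qed

lemma realises_rows_hat_strip_tile:
  assumes "w = int n + 1" "h = int n"
  shows "realises_rows (hat (strip_tile n (1 - l) (if r = 1 then 0 else \<tau> - int n + 1) (if k = 1 then 0 else \<sigma>)))"
proof -
  have s1: "s = 1" "k3 = 0" "s2 = 1"
    using strip_left strip_right rs(2) kl3(1) rs2(2) kl4(1) assms unfolding strip_shape_def by auto
  have \<tau>h: "1 \<le> \<tau>" "\<tau> \<le> h" "r = 1 \<Longrightarrow> \<tau> = 1" "l3 = (if r = 1 \<or> \<tau> < h then 1 else 0)"
      "1 \<le> \<tau>'" "\<tau>' \<le> h"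
    using strip_left strip_right unfolding strip_shape_def by auto
  have \<sigma>w: "k = 1 \<Longrightarrow> \<sigma> = 1" "1 \<le> \<sigma>" "\<sigma> < w"
    using strip_bottom s1 assms n_pos unfolding strip_shape_def by (auto split: if_splits)
  have hor: "\<tau>' = 1 \<and> (r = 1 \<longrightarrow> n = 1) \<and> (r = 0 \<longrightarrow> \<tau> \<ge> h - 1)"
  proof (cases "2 \<le> h")
    case True
    then have "top_switch r \<tau> h = h" "\<tau>' = 1"
      using horizontal assms unfolding stacked_switches_def by auto
    then show ?thesis
      using \<tau>h rs(1) True unfolding top_switch_def by (auto split: if_splits)
  next
    case False
    then show ?thesis
      using \<tau>h rs(1) assms n_pos by auto
  qed
  have "\<sigma>' = top_switch k \<sigma> w"
    using vertical assms n_pos unfolding stacked_switches_def by auto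
  then have "\<sigma>' - 1 = (if k = 1 then 0 else \<sigma>)"
    using \<sigma>w kl(1) assms unfolding top_switch_def by auto
  moreover have "l3 = 1 - (if r = 1 then 0 else \<tau> - int n + 1)"
    using \<tau>h hor rs(1) assms by auto
  moreover have "tau n (BOTTOM (hat (strip_tile n (1 - l) (if r = 1 then 0 else \<tau> - int n + 1) (if k = 1 then 0 else \<sigma>)))) =
      tau_word n l (k + int n) (nat (\<sigma> - 1)) (nat (w - \<sigma>))"
    using \<sigma>w kl assms unfolding strip_tile_def by (cases "k = 1") (auto simp: tau_eq_tau_word tau_word_eq_iff)
  ultimately show ?thesis
    unfolding realises_rows_def using s1 \<sigma>w kl(1) assms
    by (auto simp: strip_tile_def tau_eq_tau_word tau_word_eq_iff)
qed

lemma strip_witness_index: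
  assumes "w = int n" "h = int n + 1"
  shows "strip_index' n (1 - s) (if k = 1 then 0 else \<sigma> - int n + 1) (if r = 1 then 0 else \<tau>)"
proof -
  have "l3 = 1" "1 \<le> \<sigma>" "\<sigma> \<le> w" "1 \<le> \<tau>" "r = 1 \<Longrightarrow> \<tau> = 1"
    using strip_top strip_bottom strip_left kl3(2) rs4(1) assms unfolding strip_shape_def by auto
  then have "\<tau> < h"
    using strip_left assms n_pos unfolding strip_shape_def by (auto split: if_splits)
  moreover have "k = 0 \<Longrightarrow> \<sigma> \<ge> w - 1"
    using vertical \<open>1 \<le> \<sigma>\<close> \<open>\<sigma> \<le> w\<close> n_pos assms unfolding stacked_switches_def top_switch_def
    by (cases "2 \<le> w") auto
  ultimately show ?thesis
    using \<open>\<sigma> \<le> w\<close> \<open>1 \<le> \<tau>\<close> \<open>r = 1 \<Longrightarrow> \<tau> = 1\<close> kl(1) rs assms unfolding strip_index'_def by auto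
qed

end

lemma block_frame_transpose:
  assumes "block_frame n k l r s r2 s2 k3 l3 k4 l4 r4 s4 \<sigma> \<sigma>' \<tau> \<tau>' w h"
  shows "block_frame n r s k l k3 l3 r2 s2 r4 s4 k4 l4 \<tau> \<tau>' \<sigma> \<sigma>' h w"
  using assms unfolding block_frame_def by auto

text \<open>The left and right words of a tile are the bottom and top words of its transpose in the
  transposed frame, so each shape of block below only needs its bottom and top words checked.\<close>

lemma (in block_frame) realises_iff:
  "realises t \<longleftrightarrow> t \<in> T'set n \<and> realises_rows t \<and> block_frame.realises_rows n r s r2 s2 \<tau> \<tau>' h (hat t)"
  unfolding realises_def realises_rows_def block_frame.realises_rows_def[OF block_frame_transpose[OF block_frame_axioms]]
  by auto

lemma (in block_frame) realises_hat:
  "block_frame.realises n r s k l k3 l3 r2 s2 \<tau> \<tau>' \<sigma> \<sigma>' h w t \<Longrightarrow> realises (hat t)"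
  using block_frame.realises_def[OF block_frame_transpose[OF block_frame_axioms]]
  unfolding realises_def by (auto intro: hat_in_T'set)

lemma (in block_frame) realises_strip_tile:
  assumes "w = int n" "h = int n + 1"
  shows "realises (strip_tile n (1 - s) (if k = 1 then 0 else \<sigma> - int n + 1) (if r = 1 then 0 else \<tau>))"
proof -
  interpret transposed: block_frame n r s k l k3 l3 r2 s2 r4 s4 k4 l4 \<tau> \<tau>' \<sigma> \<sigma>' h w
    by (rule block_frame_transpose[OF block_frame_axioms])
  show ?thesis
    unfolding realises_iff using strip_tile_in_T'set(1)[OF strip_witness_index[OF assms]]
      realises_rows_strip_tile[OF assms] transposed.realises_rows_hat_strip_tile[OF assms(2,1)] by simp
qed

lemma (in block_frame) realisable: "\<exists>t. realises t"
proof -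
  interpret transposed: block_frame n r s k l k3 l3 r2 s2 r4 s4 k4 l4 \<tau> \<tau>' \<sigma> \<sigma>' h w
    by (rule block_frame_transpose[OF block_frame_axioms])
  consider (J) "w = int n + 1" "h = int n + 1" | (W) "w = int n" "h = int n"
    | (strip) "w = int n" "h = int n + 1" | (hat_strip) "w = int n + 1" "h = int n"
    using width height by blast
  then show ?thesis
  proof cases
    case J
    let ?t = "jtile n (1 - s2) (1 - l) (1 - l3) (1 - s)"
    have "l = r2" "s = k3"
      using strip_bottom strip_left J unfolding strip_shape_def by auto
    then have "?t \<in> T'set n"
      using kl(2) rs(2) rs2 kl3 by (intro jtile_in_T'set) (auto simp: Jpairs_iff)
    then have "realises ?t"
      unfolding realises_iff using realises_rows_jtile[OF J] transposed.realises_rows_jtile[OF J(2,1)] by (simp add: hat_jtile)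
    then show ?thesis ..
  next
    case W
    let ?t = "wtile (if r = 1 then 1 else \<tau> + 1) (if k = 1 then 1 else \<sigma> + 1)"
    have "?t \<in> T'set n"
      using realises_rows_wtile[OF W] transposed.realises_rows_wtile[OF W(2,1)] by (intro wtile_in_T'set)
    then have "realises ?t"
      unfolding realises_iff using realises_rows_wtile[OF W] transposed.realises_rows_wtile[OF W(2,1)] by (simp add: hat_wtile)
    then show ?thesis ..
  next
    case strip
    then show ?thesis
      using realises_strip_tile by blast
  next
    case hat_strip
    then show ?thesis
      using transposed.realises_strip_tile[OF hat_strip(2,1)] realises_hat by blast
  qed
qed

section \<open>The grid of J-tiles in a configuration of \<open>\<Omega>\<^sub>n\<close>\<close>

definition transpose :: "config \<Rightarrow> config" where
  "transpose x = (\<lambda>(a, b). hat (x (b, a)))"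

lemma valid_transpose: "valid_config (Tset n) x \<Longrightarrow> valid_config (Tset n) (transpose x)"
  unfolding valid_config_def transpose_def by (auto intro: hat_in_Tset)

text \<open>\<open>X\<close> and \<open>Y\<close> enumerate the columns and rows containing J-tiles; block \<open>(i, j)\<close> of the
  configuration is the rectangle with lower left corner \<open>(X i, Y j)\<close> and upper right corner
  \<open>(X (i + 1) - 1, Y (j + 1) - 1)\<close>.\<close>

locale J_grid =
  fixes n :: nat and x :: config and X Y :: "int \<Rightarrow> int"
  assumes n_pos: "1 \<le> n" and valid: "valid_config (Tset n) x"
    and X_incr: "\<And>i. X i < X (i + 1)" and Y_incr: "\<And>j. Y j < Y (j + 1)"
    and J_column: "\<And>a. fst (BOTTOM (x (a, 0))) = 0 \<longleftrightarrow> (\<exists>i. X i = a)"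
    and J_row: "\<And>b. fst (LEFT (x (0, b))) = 0 \<longleftrightarrow> (\<exists>j. Y j = b)"
begin

lemma tile_in_Tset: "x p \<in> Tset n"
  using valid unfolding valid_config_def by (cases p) auto

lemma match_right: "RIGHT (x (a, b)) = LEFT (x (a + 1, b))"
  using valid unfolding valid_config_def by auto

lemma match_top: "TOP (x (a, b)) = BOTTOM (x (a, b + 1))"
  using valid unfolding valid_config_def by auto

lemma column_letter: "fst (BOTTOM (x (a, b))) = fst (BOTTOM (x (a, 0)))"
proof (induction b rule: int_induct[where k = 0])
  case (step1 b)
  then show ?case using match_top[of a b] Tset_first_letters(2)[OF tile_in_Tset, of "(a, b)"] by simp
next
  case (step2 b)
  then show ?case using match_top[of a "b - 1"] Tset_first_letters(2)[OF tile_in_Tset, of "(a, b - 1)"] by simp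
qed simp

lemma row_letter: "fst (LEFT (x (a, b))) = fst (LEFT (x (0, b)))"
proof (induction a rule: int_induct[where k = 0])
  case (step1 a)
  then show ?case using match_right[of a b] Tset_first_letters(1)[OF tile_in_Tset, of "(a, b)"] by simp
next
  case (step2 a)
  then show ?case using match_right[of "a - 1" b] Tset_first_letters(1)[OF tile_in_Tset, of "(a - 1, b)"] by simp
qed simp

lemma not_J_column:
  assumes "X i < a" "a < X (i + 1)"
  shows "fst (BOTTOM (x (a, b))) \<noteq> 0"
proof
  assume "fst (BOTTOM (x (a, b))) = 0"
  then obtain i' where "X i' = a"
    using J_column column_letter by metis
  then show False
    using assms incr_seq_less_iff[of X, OF X_incr, of i i'] incr_seq_less_iff[of X, OF X_incr, of i' "i + 1"]
    by auto
qed

lemma not_J_row: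
  assumes "Y j < b" "b < Y (j + 1)"
  shows "fst (LEFT (x (a, b))) \<noteq> 0"
proof
  assume "fst (LEFT (x (a, b))) = 0"
  then obtain j' where "Y j' = b"
    using J_row row_letter by metis
  then show False
    using assms incr_seq_less_iff[of Y, OF Y_incr, of j j'] incr_seq_less_iff[of Y, OF Y_incr, of j' "j + 1"]
    by auto
qed

definition width :: "int \<Rightarrow> int" where "width i = X (i + 1) - X i"
definition height :: "int \<Rightarrow> int" where "height j = Y (j + 1) - Y j"
definition corner :: "int \<Rightarrow> int \<Rightarrow> tile" where "corner i j = x (X i, Y j)"

lemma width_pos: "1 \<le> width i"
  using X_incr[of i] unfolding width_def by simp

lemma height_pos: "1 \<le> height j"
  using Y_incr[of j] unfolding height_def by simp

lemma corner_jtile: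
  "corner i j = jtile n (jk (corner i j)) (jl (corner i j)) (jr (corner i j)) (js (corner i j))"
  "J_params (jk (corner i j)) (jl (corner i j)) (jr (corner i j)) (js (corner i j))"
proof -
  have "fst (LEFT (corner i j)) = 0" "fst (BOTTOM (corner i j)) = 0"
    unfolding corner_def using J_row J_column row_letter column_letter by metis+
  then obtain k l r s where "corner i j = jtile n k l r s" "J_params k l r s"
    using Tset_J_tile tile_in_Tset unfolding corner_def by metis
  then show "corner i j = jtile n (jk (corner i j)) (jl (corner i j)) (jr (corner i j)) (js (corner i j))"
    "J_params (jk (corner i j)) (jl (corner i j)) (jr (corner i j)) (js (corner i j))"
    by simp_all
qed

lemma corner_colours:
  "jk (corner i j) \<in> {0, 1}" "jl (corner i j) \<in> {0, 1}" "jk (corner i j) \<le> jl (corner i j)"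
  "jr (corner i j) \<in> {0, 1}" "js (corner i j) \<in> {0, 1}" "jr (corner i j) \<le> js (corner i j)"
  using J_params_cases[OF corner_jtile(2)] by auto

lemma corner_sides:
  "RIGHT (corner i j) = (0, jk (corner i j), jl (corner i j))"
  "LEFT (corner i j) = (0, js (corner i j), jr (corner i j) + int n)"
  "BOTTOM (corner i j) = (0, jl (corner i j), jk (corner i j) + int n)"
  by (subst corner_jtile(1), simp add: jtile_def)+

lemma strip_tile_at:
  assumes "1 \<le> p" "p < width i"
  obtains b c v where "x (X i + p, Y j) = strip_tile n b c v" "strip_index n b c v"
proof -
  have "fst (LEFT (x (X i + p, Y j))) = 0"
    using J_row row_letter by metis
  moreover have "fst (BOTTOM (x (X i + p, Y j))) \<noteq> 0"
    using assms by (intro not_J_column[of i]) (auto simp: width_def)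
  ultimately show thesis
    using Tset_strip_tile[OF tile_in_Tset] that by blast
qed

lemma wtile_at:
  assumes "1 \<le> p" "p < width i" "1 \<le> q" "q < height j"
  obtains a d where "x (X i + p, Y j + q) = wtile a d"
proof -
  have "fst (LEFT (x (X i + p, Y j + q))) \<noteq> 0"
    using assms by (intro not_J_row[of j]) (auto simp: height_def)
  moreover have "fst (BOTTOM (x (X i + p, Y j + q))) \<noteq> 0"
    using assms by (intro not_J_column[of i]) (auto simp: width_def)
  ultimately show thesis
    using Tset_wtile[OF tile_in_Tset] that by metis
qed

definition carry :: "int \<Rightarrow> int \<Rightarrow> int \<Rightarrow> int" where
  "carry i j p = fst (snd (RIGHT (x (X i + p, Y j))))"

lemma strip_right:
  assumes "0 \<le> p" "p < width i"
  shows "RIGHT (x (X i + p, Y j)) = (0, carry i j p, jl (corner i j) + p)"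
  using assms
proof (induction p rule: int_ge_induct)
  case base
  then show ?case
    using corner_sides(1) unfolding carry_def corner_def by simp
next
  case (step p)
  have "1 \<le> p + 1" "p + 1 < width i"
    using step by auto
  then obtain b c v where t: "x (X i + (p + 1), Y j) = strip_tile n b c v" "strip_index n b c v"
    by (rule strip_tile_at)
  have "LEFT (x (X i + (p + 1), Y j)) = RIGHT (x (X i + p, Y j))"
    using match_right[of "X i + p" "Y j"] by (simp add: add.assoc)
  then have "b = carry i j p" "v = jl (corner i j) + p"
    using t step by (auto simp: strip_tile_def)
  then show ?case
    using t unfolding carry_def by (simp add: strip_tile_def)
qed

lemma strip_colours:
  assumes "1 \<le> p" "p < width i"
  shows "TOP (x (X i + p, Y j)) = (1, 1, 1 + carry i j (p - 1))"
    and "BOTTOM (x (X i + p, Y j)) = (1, 1, int n + carry i j p)"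
    and "carry i j (p - 1) \<le> carry i j p" "carry i j p \<in> {0, 1}"
    and "carry i j p = 0 \<Longrightarrow> jl (corner i j) + p \<le> int n"
proof -
  obtain b c v where t: "x (X i + p, Y j) = strip_tile n b c v" "strip_index n b c v"
    using strip_tile_at assms by blast
  have "LEFT (x (X i + p, Y j)) = RIGHT (x (X i + (p - 1), Y j))"
    using match_right[of "X i + (p - 1)" "Y j"] by simp
  then have "(0, b, v) = (0, carry i j (p - 1), jl (corner i j) + (p - 1))"
    using t(1) strip_right[of "p - 1" i j] assms by (simp add: strip_tile_def)
  moreover have "c = carry i j p"
    using t(1) unfolding carry_def by (simp add: strip_tile_def)
  ultimately have "b = carry i j (p - 1)" "v = jl (corner i j) + p - 1" "c = carry i j p"
    by auto
  then show "TOP (x (X i + p, Y j)) = (1, 1, 1 + carry i j (p - 1))"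
    and "BOTTOM (x (X i + p, Y j)) = (1, 1, int n + carry i j p)"
    and "carry i j (p - 1) \<le> carry i j p" "carry i j p \<in> {0, 1}"
    and "carry i j p = 0 \<Longrightarrow> jl (corner i j) + p \<le> int n"
    using t unfolding strip_index_def strip_index'_def by (auto simp: strip_tile_def)
qed

lemma carry_0: "carry i j 0 = jk (corner i j)"
  using corner_sides(1) unfolding carry_def corner_def by simp

text \<open>Along a strip the middle letters \<open>carry i j p\<close> step up from \<open>0\<close> to \<open>1\<close> at most once, at
  position \<open>switch i j\<close>; this position determines all colours of the strip.\<close>

definition switch :: "int \<Rightarrow> int \<Rightarrow> int" where
  "switch i j = (SOME \<sigma>. 1 \<le> \<sigma> \<and> \<sigma> \<le> width i
     \<and> (\<forall>p. 1 \<le> p \<longrightarrow> p < width i \<longrightarrow> carry i j p = (if \<sigma> \<le> p then 1 else 0)))"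

lemma switch:
  shows "1 \<le> switch i j" "switch i j \<le> width i"
    and "\<And>p. 1 \<le> p \<Longrightarrow> p < width i \<Longrightarrow> carry i j p = (if switch i j \<le> p then 1 else 0)"
proof -
  have "\<exists>\<sigma>. 1 \<le> \<sigma> \<and> \<sigma> \<le> width i
      \<and> (\<forall>p. 1 \<le> p \<longrightarrow> p < width i \<longrightarrow> carry i j p = (if \<sigma> \<le> p then 1 else 0))"
  proof (rule mono_01_step)
    show "carry i j p \<le> carry i j (p + 1)" if "1 \<le> p" "p + 1 < width i" for p
      using strip_colours(3)[of "p + 1" i j] that by simp
  qed (use strip_colours(4) width_pos in auto)
  from someI_ex[OF this] show "1 \<le> switch i j" "switch i j \<le> width i"
    and "\<And>p. 1 \<le> p \<Longrightarrow> p < width i \<Longrightarrow> carry i j p = (if switch i j \<le> p then 1 else 0)"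
    unfolding switch_def by blast+
qed

lemma row_strip_shape:
  "strip_shape n (jk (corner i j)) (jl (corner i j)) (jr (corner (i + 1) j)) (js (corner (i + 1) j))
     (switch i j) (width i)"
proof -
  let ?k = "jk (corner i j)" and ?l = "jl (corner i j)" and ?w = "width i" and ?\<sigma> = "switch i j"
  have "RIGHT (x (X i + (?w - 1), Y j)) = LEFT (corner (i + 1) j)"
    using match_right[of "X i + (?w - 1)" "Y j"] unfolding corner_def width_def by simp
  then have end_colour: "?l + ?w - 1 = jr (corner (i + 1) j) + int n" "js (corner (i + 1) j) = carry i j (?w - 1)"
    using strip_right[of "?w - 1" i j] width_pos[of i] corner_sides(2)[of "i + 1" j] by simp_all
  have k1: "?\<sigma> = 1" if "?k = 1"
  proof (cases "?w = 1")
    case False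
    then have "carry i j 1 = 1"
      using strip_colours(3,4)[of 1 i j] width_pos[of i] that carry_0[of i j] by auto
    then show ?thesis
      using switch[of i j] switch(3)[of 1 i j] width_pos[of i] False by (auto split: if_splits)
  qed (use switch[of i j] in auto)
  have "?\<sigma> \<le> int n + 1 - ?l"
  proof (cases "?\<sigma> = 1")
    case True
    then show ?thesis using corner_colours(2)[of i j] n_pos by auto
  next
    case False
    then have "carry i j (?\<sigma> - 1) = 0"
      using switch[of i j] switch(3)[of "?\<sigma> - 1" i j] by auto
    then show ?thesis
      using strip_colours(5)[of "?\<sigma> - 1" i j] switch[of i j] False by auto
  qed
  moreover have "js (corner (i + 1) j) = (if ?k = 1 \<or> ?\<sigma> < ?w then 1 else 0)"
  proof (cases "?w = 1")
    case True
    then show ?thesis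
      using end_colour(2) carry_0[of i j] corner_colours(1)[of i j] switch[of i j] by auto
  next
    case False
    then show ?thesis
      using end_colour(2) switch(3)[of "?w - 1" i j] width_pos[of i] k1 switch[of i j] by auto
  qed
  ultimately show ?thesis
    unfolding strip_shape_def using end_colour(1) switch[of i j] k1 by auto
qed

lemma strip_bottom_colour:
  "1 \<le> p \<Longrightarrow> p < width i \<Longrightarrow> BOTTOM (x (X i + p, Y j)) = (1, 1, int n + (if switch i j \<le> p then 1 else 0))"
  using strip_colours(2) switch(3) by simp

lemma strip_top_colour:
  assumes "1 \<le> p" "p < width i"
  shows "TOP (x (X i + p, Y j)) =
    (1, 1, 1 + (if top_switch (jk (corner i j)) (switch i j) (width i) \<le> p then 1 else 0))"
proof -
  have "carry i j (p - 1) = (if top_switch (jk (corner i j)) (switch i j) (width i) \<le> p then 1 else 0)"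
  proof (cases "p = 1")
    case True
    then show ?thesis
      using carry_0[of i j] corner_colours(1)[of i j] switch[of i j] assms
      unfolding top_switch_def by auto
  next
    case False
    then show ?thesis
      using switch(3)[of "p - 1" i j] row_strip_shape[of i j] assms
      unfolding top_switch_def strip_shape_def by auto
  qed
  then show ?thesis
    using strip_colours(1)[OF assms] by simp
qed

lemma bottom_word:
  "map (\<lambda>p. BOTTOM (x (X i + int p, Y j))) [0..<nat (width i)] =
    tau_word n (jl (corner i j)) (jk (corner i j) + int n) (nat (switch i j - 1)) (nat (width i - switch i j))"
proof (rule nth_equalityI)
  show "length (map (\<lambda>p. BOTTOM (x (X i + int p, Y j))) [0..<nat (width i)]) =
      length (tau_word n (jl (corner i j)) (jk (corner i j) + int n) (nat (switch i j - 1)) (nat (width i - switch i j)))"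
    using switch[of i j] by (simp add: length_tau_word)
next
  fix q
  assume "q < length (map (\<lambda>p. BOTTOM (x (X i + int p, Y j))) [0..<nat (width i)])"
  then have q: "int q < width i"
    by simp
  show "map (\<lambda>p. BOTTOM (x (X i + int p, Y j))) [0..<nat (width i)] ! q =
      tau_word n (jl (corner i j)) (jk (corner i j) + int n) (nat (switch i j - 1)) (nat (width i - switch i j)) ! q"
  proof (cases q)
    case 0
    then show ?thesis
      using q corner_sides(3)[of i j] unfolding corner_def tau_word_def by simp
  next
    case (Suc q')
    then show ?thesis
      using q strip_bottom_colour[of "int q" i j] switch[of i j]
      unfolding tau_word_def by (auto simp: nth_append)
  qed
qed

lemma column_rise:
  assumes "1 \<le> p" "p < width i"
  shows "snd (snd (BOTTOM (x (X i + p, Y (j + 1))))) = snd (snd (TOP (x (X i + p, Y j)))) + height j - 1"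
proof -
  have "snd (snd (BOTTOM (x (X i + p, Y j + q)))) = snd (snd (TOP (x (X i + p, Y j)))) + q - 1"
    if "1 \<le> q" "q \<le> height j" for q
    using that
  proof (induction q rule: int_ge_induct)
    case base
    then show ?case using match_top[of "X i + p" "Y j"] by simp
  next
    case (step q)
    obtain a d where "x (X i + p, Y j + q) = wtile a d"
      using wtile_at[OF assms, of q j] step by auto
    moreover have "BOTTOM (x (X i + p, Y j + (q + 1))) = TOP (x (X i + p, Y j + q))"
      using match_top[of "X i + p" "Y j + q"] by (simp add: add.assoc)
    ultimately show ?case
      using step by (simp add: wtile_def)
  qed
  from this[of "height j"] show ?thesis
    using height_pos[of j] unfolding height_def by simp
qed

lemma stacked_rows:
  assumes "int n \<le> height j"
  shows "stacked_switches n (jk (corner i j)) (switch i j) (switch i (j + 1)) (width i) (height j)"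
  unfolding stacked_switches_def
proof
  let ?k = "jk (corner i j)" and ?\<sigma> = "switch i j" and ?\<sigma>' = "switch i (j + 1)" and ?w = "width i"
  assume w2: "2 \<le> ?w"
  have "1 \<le> top_switch ?k ?\<sigma> ?w" "top_switch ?k ?\<sigma> ?w \<le> ?w"
    using switch[of i j] w2 unfolding top_switch_def by auto
  moreover have "height j = int n + (if ?\<sigma>' \<le> p then 1 else 0) - (if top_switch ?k ?\<sigma> ?w \<le> p then 1 else 0)"
    if "1 \<le> p" "p \<le> ?w - 1" for p
    using column_rise[of p i j] strip_top_colour[of p i j] strip_bottom_colour[of p i "j + 1"] that
    by simp
  ultimately show "(height j = int n + 1 \<and> top_switch ?k ?\<sigma> ?w = ?w \<and> ?\<sigma>' = 1)
      \<or> (height j = int n \<and> top_switch ?k ?\<sigma> ?w = ?\<sigma>')"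
    using stacked_switches_solution[OF w2] switch[of i "j + 1"] assms by blast
qed

subsection \<open>Columns as rows of the transposed configuration\<close>

lemma transposed: "J_grid n (transpose x) Y X"
  using n_pos valid_transpose[OF valid] Y_incr X_incr J_row J_column
  by unfold_locales (auto simp: transpose_def)

definition col_switch :: "int \<Rightarrow> int \<Rightarrow> int" where
  "col_switch i j = J_grid.switch (transpose x) Y X j i"

lemma transposed_corner: "J_grid.corner (transpose x) Y X j i = hat (corner i j)"
  unfolding J_grid.corner_def[OF transposed] by (simp add: corner_def transpose_def)

lemma transposed_width: "J_grid.width Y j = height j"
  unfolding J_grid.width_def[OF transposed] height_def ..

lemma transposed_height: "J_grid.height X i = width i"
  unfolding J_grid.height_def[OF transposed] width_def ..

lemma column_strip_shape:
  "strip_shape n (jr (corner i j)) (js (corner i j)) (jk (corner i (j + 1))) (jl (corner i (j + 1)))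
     (col_switch i j) (height j)"
  using J_grid.row_strip_shape[OF transposed, of j i]
  unfolding transposed_corner transposed_width col_switch_def by simp

lemma left_word:
  "map (\<lambda>q. LEFT (x (X i, Y j + int q))) [0..<nat (height j)] =
    tau_word n (js (corner i j)) (jr (corner i j) + int n) (nat (col_switch i j - 1)) (nat (height j - col_switch i j))"
  using J_grid.bottom_word[OF transposed, of j i]
  unfolding transposed_corner transposed_width col_switch_def by (simp add: transpose_def)

lemma width_ge: "int n \<le> width i"
  using row_strip_shape[of i 0] corner_colours[of i 0] corner_colours[of "i + 1" 0]
  unfolding strip_shape_def by auto

lemma height_ge: "int n \<le> height j"
  using column_strip_shape[of 0 j] corner_colours[of 0 j] corner_colours[of 0 "j + 1"]
  unfolding strip_shape_def by auto

lemma stacked_columns: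
  "stacked_switches n (jr (corner i j)) (col_switch i j) (col_switch (i + 1) j) (height j) (width i)"
  using J_grid.stacked_rows[OF transposed, of i j] width_ge[of i]
  unfolding transposed_corner transposed_width transposed_height col_switch_def by simp

end

text \<open>A strip of width \<open>n + 2\<close> can only occur for \<open>n = 1\<close> between rows at distance \<open>1\<close>;
  its switch then grows by one from each strip to the next, which is impossible three times in
  a row.\<close>

lemma three_strips_width_bound:
  fixes k l r2 s2 k3 l3 r4 s4 k5 l5 r6 s6 \<sigma> \<sigma>' \<sigma>'' w h1 h2 :: int
  assumes "1 \<le> n"
    and pairs: "(k, l) \<in> Jpairs" "(k3, l3) \<in> Jpairs" "l5 \<in> {0, 1}" "r2 \<in> {0, 1}" "r4 \<in> {0, 1}"
    and strips: "strip_shape n k l r2 s2 \<sigma> w" "strip_shape n k3 l3 r4 s4 \<sigma>' w" "strip_shape n k5 l5 r6 s6 \<sigma>'' w"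
    and stacked: "stacked_switches n k \<sigma> \<sigma>' w h1" "stacked_switches n k3 \<sigma>' \<sigma>'' w h2"
    and heights: "int n \<le> h1" "int n \<le> h2"
    and tall: "2 \<le> h1 \<Longrightarrow> w \<le> int n + 1" "2 \<le> h2 \<Longrightarrow> w \<le> int n + 1"
  shows "w \<le> int n + 1"
proof (rule ccontr)
  assume wide: "\<not> w \<le> int n + 1"
  have "k \<in> {0, 1}" "l \<in> {0, 1}" "k \<le> l" "k3 \<in> {0, 1}" "l3 \<in> {0, 1}" "k3 \<le> l3"
    using pairs(1,2) unfolding Jpairs_iff by auto
  moreover have "w = int n + 1 + r2 - l" "\<sigma> \<le> int n + 1 - l" "1 \<le> \<sigma>"
    and "w = int n + 1 + r4 - l3" "\<sigma>' \<le> int n + 1 - l3" and "\<sigma>'' \<le> int n + 1 - l5"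
    using strips unfolding strip_shape_def by auto
  ultimately have w: "w = int n + 2" "l = 0" "k = 0" "l3 = 0" "k3 = 0" "\<sigma> \<le> int n + 1" "1 \<le> \<sigma>"
      "\<sigma>' \<le> int n + 1" "\<sigma>'' \<le> int n + 1 - l5"
    using wide pairs(4,5) by auto
  have "h1 = 1" "n = 1"
    using tall(1) wide heights(1) \<open>1 \<le> n\<close> by linarith+
  then have "\<sigma>' = 2"
    using stacked(1) w unfolding stacked_switches_def top_switch_def by auto
  moreover have "h2 = 1"
    using tall(2) wide heights(2) \<open>n = 1\<close> by linarith
  ultimately have "\<sigma>'' = 3"
    using stacked(2) w \<open>n = 1\<close> unfolding stacked_switches_def top_switch_def by auto
  then show False
    using w pairs(3) \<open>n = 1\<close> by auto
qed

context J_grid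
begin

lemma width_le: "width i \<le> int n + 1"
proof -
  have stacked: "stacked_switches n (jk (corner i 0)) (switch i 0) (switch i 1) (width i) (height 0)"
    "stacked_switches n (jk (corner i 1)) (switch i 1) (switch i 2) (width i) (height 1)"
    using stacked_rows[OF height_ge[of 0], where i = i] stacked_rows[OF height_ge[of 1], where i = i]
    by simp_all
  have tall: "2 \<le> height j \<Longrightarrow> width i \<le> int n + 1" for j
    using stacked_columns[of i j] unfolding stacked_switches_def by auto
  have pairs: "(jk (corner i 0), jl (corner i 0)) \<in> Jpairs" "(jk (corner i 1), jl (corner i 1)) \<in> Jpairs"
    "jl (corner i 2) \<in> {0, 1}" "jr (corner (i + 1) 0) \<in> {0, 1}" "jr (corner (i + 1) 1) \<in> {0, 1}"
    using corner_colours unfolding Jpairs_iff by blast+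
  show ?thesis
    by (rule three_strips_width_bound[OF n_pos pairs row_strip_shape[of i 0] row_strip_shape[of i 1]
          row_strip_shape[of i 2] stacked height_ge height_ge tall tall])
qed

lemma block_frame_at:
  "block_frame n (jk (corner i j)) (jl (corner i j)) (jr (corner i j)) (js (corner i j))
    (jr (corner (i + 1) j)) (js (corner (i + 1) j)) (jk (corner i (j + 1))) (jl (corner i (j + 1)))
    (jk (corner (i + 1) (j + 1))) (jl (corner (i + 1) (j + 1))) (jr (corner (i + 1) (j + 1))) (js (corner (i + 1) (j + 1)))
    (switch i j) (switch i (j + 1)) (col_switch i j) (col_switch (i + 1) j) (width i) (height j)"
proof
  show "width i = int n \<or> width i = int n + 1"
    using width_ge[of i] width_le[of i] by auto
  show "height j = int n \<or> height j = int n + 1"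
    using height_ge[of j] J_grid.width_le[OF transposed, of j] unfolding transposed_width by auto
qed (use n_pos corner_colours row_strip_shape column_strip_shape stacked_rows[OF height_ge] stacked_columns
    in \<open>simp_all add: Jpairs_iff\<close>)

end

section \<open>Desubstitution\<close>

context J_grid
begin

definition block_bottom :: "int \<Rightarrow> int \<Rightarrow> color list" where
  "block_bottom i j = map (\<lambda>p. BOTTOM (x (X i + int p, Y j))) [0..<nat (width i)]"

definition block_left :: "int \<Rightarrow> int \<Rightarrow> color list" where
  "block_left i j = map (\<lambda>q. LEFT (x (X i, Y j + int q))) [0..<nat (height j)]"

definition fits :: "int \<Rightarrow> int \<Rightarrow> tile \<Rightarrow> bool" where
  "fits i j t \<longleftrightarrow> t \<in> T'set n \<and> tau n (BOTTOM t) = block_bottom i j \<and> tau n (LEFT t) = block_left i j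
     \<and> tau n (TOP t) = block_bottom i (j + 1) \<and> tau n (RIGHT t) = block_left (i + 1) j"

lemma fitting_tile_exists: "\<exists>t. fits i j t"
proof -
  interpret frame: block_frame n "jk (corner i j)" "jl (corner i j)" "jr (corner i j)" "js (corner i j)"
    "jr (corner (i + 1) j)" "js (corner (i + 1) j)" "jk (corner i (j + 1))" "jl (corner i (j + 1))"
    "jk (corner (i + 1) (j + 1))" "jl (corner (i + 1) (j + 1))" "jr (corner (i + 1) (j + 1))"
    "js (corner (i + 1) (j + 1))" "switch i j" "switch i (j + 1)" "col_switch i j" "col_switch (i + 1) j"
    "width i" "height j"
    by (rule block_frame_at)
  obtain t where "frame.realises t"
    using frame.realisable by blast
  then show ?thesis
    unfolding frame.realises_def fits_def block_bottom_def block_left_def bottom_word left_word by blast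
qed

definition desubst :: config where
  "desubst = (\<lambda>(i, j). SOME t. fits i j t)"

lemma desubst_fits: "fits i j (desubst (i, j))"
  unfolding desubst_def using someI_ex[OF fitting_tile_exists] by simp

lemma desubst_valid: "valid_config (T'set n) desubst"
  unfolding valid_config_def
proof (intro allI conjI)
  fix i j
  have T': "desubst (i', j') \<in> T'set n" for i' j'
    using desubst_fits unfolding fits_def by blast
  then show "desubst (i, j) \<in> T'set n" .
  have V: "in_V n (c (desubst (i', j')))" if "c \<in> {RIGHT, TOP, LEFT, BOTTOM}" for c i' j'
    using T'set_local_rule[OF T' n_pos] that unfolding obeys_local_rule_def by auto
  show "RIGHT (desubst (i, j)) = LEFT (desubst (i + 1, j))"
    using desubst_fits[of i j] desubst_fits[of "i + 1" j] V[of RIGHT i j] V[of LEFT "i + 1" j]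
      inj_onD[OF inj_on_tau[OF n_pos]] unfolding fits_def by auto
  show "TOP (desubst (i, j)) = BOTTOM (desubst (i, j + 1))"
    using desubst_fits[of i j] desubst_fits[of i "j + 1"] V[of TOP i j] V[of BOTTOM i "j + 1"]
      inj_onD[OF inj_on_tau[OF n_pos]] unfolding fits_def by auto
qed

lemma desubst_size:
  "tile_width n (desubst (i, j)) = nat (width i)" "tile_height n (desubst (i, j)) = nat (height j)"
  using desubst_fits[of i j] unfolding fits_def tile_width_def tile_height_def block_bottom_def block_left_def
  by simp_all

definition block :: "int \<Rightarrow> int \<Rightarrow> nat \<times> nat \<Rightarrow> tile" where
  "block i j = (\<lambda>(u, v). if u < nat (width i) \<and> v < nat (height j) then x (X i + int u, Y j + int v) else undefined)"

lemma block_pattern: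
  fixes i j
  defines "w \<equiv> nat (width i)" and "h \<equiv> nat (height j)"
  shows "valid_pattern (T'set n) w h (block i j)"
    and "right_labels w h (block i j) = block_left (i + 1) j"
    and "top_labels w h (block i j) = block_bottom i (j + 1)"
    and "left_labels h (block i j) = block_left i j"
    and "bottom_labels w (block i j) = block_bottom i j"
proof -
  have w: "1 \<le> w" "int w = width i"
    using width_pos[of i] unfolding w_def by auto
  have h: "1 \<le> h" "int h = height j"
    using height_pos[of j] unfolding h_def by auto
  show "valid_pattern (T'set n) w h (block i j)"
    unfolding valid_pattern_def block_def w_def[symmetric] h_def[symmetric]
    using tile_in_Tset Tset_subset_T'set match_right match_top by (auto simp: ac_simps)
  have "X i + int (w - 1) + 1 = X (i + 1)"
    using w unfolding width_def by auto
  then have "right_labels w h (block i j) = map (\<lambda>q. LEFT (x (X (i + 1), Y j + int q))) [0..<h]"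
    unfolding right_labels_def block_def w_def[symmetric] h_def[symmetric] using w match_right by simp
  then show "right_labels w h (block i j) = block_left (i + 1) j"
    unfolding block_left_def h_def .
  have "Y j + int (h - 1) + 1 = Y (j + 1)"
    using h unfolding height_def by auto
  then have "top_labels w h (block i j) = map (\<lambda>p. BOTTOM (x (X i + int p, Y (j + 1)))) [0..<w]"
    unfolding top_labels_def block_def w_def[symmetric] h_def[symmetric] using h match_top by simp
  then show "top_labels w h (block i j) = block_bottom i (j + 1)"
    unfolding block_bottom_def w_def .
  show "left_labels h (block i j) = block_left i j"
    unfolding left_labels_def block_left_def block_def w_def[symmetric] h_def[symmetric] using w by simp
  show "bottom_labels w (block i j) = block_bottom i j"
    unfolding bottom_labels_def block_bottom_def block_def w_def[symmetric] h_def[symmetric] using h by simp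
qed

lemma omega_tile_desubst: "omega_tile n (desubst (i, j)) = block i j"
proof -
  let ?w = "nat (width i)" and ?h = "nat (height j)"
  let ?Q = "\<lambda>p. valid_pattern (T'set n) ?w ?h p
    \<and> right_labels ?w ?h p = tau n (RIGHT (desubst (i, j)))
    \<and> top_labels ?w ?h p = tau n (TOP (desubst (i, j)))
    \<and> left_labels ?h p = tau n (LEFT (desubst (i, j)))
    \<and> bottom_labels ?w p = tau n (BOTTOM (desubst (i, j)))
    \<and> (\<forall>u v. \<not> (u < ?w \<and> v < ?h) \<longrightarrow> p (u, v) = undefined)"
  have "\<forall>u v. \<not> (u < ?w \<and> v < ?h) \<longrightarrow> block i j (u, v) = undefined"
    by (simp add: block_def)
  then have block: "?Q (block i j)"
    using block_pattern[where i = i and j = j] desubst_fits[of i j] unfolding fits_def by simp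
  have "p = block i j" if "?Q p" for p
  proof
    fix uv :: "nat \<times> nat"
    obtain u v where uv: "uv = (u, v)"
      by (cases uv)
    show "p uv = block i j uv"
    proof (cases "u < ?w \<and> v < ?h")
      case True
      have "p (u, v) = block i j (u, v)"
      proof (rule valid_pattern_unique[of "T'set n" ?w ?h p "block i j"])
        show "t = t'" if "t \<in> T'set n" "t' \<in> T'set n" "LEFT t = LEFT t'" "BOTTOM t = BOTTOM t'" for t t'
          using T'set_deterministic[OF that(1,2) n_pos that(3,4)] .
      qed (use that block True in auto)
      then show ?thesis
        unfolding uv .
    next
      case False
      then show ?thesis
        using that block uv by auto
    qed
  qed
  then show ?thesis
    unfolding omega_tile_def desubst_size by (rule the_equality[of ?Q, OF block])
qed

lemma omega_conf_desubst: "omega_conf n desubst (a - X 0, b - Y 0) = x (a, b)"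
proof -
  have widths: "(\<lambda>m. int (tile_width n (desubst (m, 0)))) = width"
  proof
    show "int (tile_width n (desubst (m, 0))) = width m" for m
      using width_pos[of m] by (simp add: desubst_size)
  qed
  have heights: "(\<lambda>m. int (tile_height n (desubst (0, m)))) = height"
  proof
    show "int (tile_height n (desubst (0, m))) = height m" for m
      using height_pos[of m] by (simp add: desubst_size)
  qed
  have off_width: "off width m = X m - X 0" for m
    by (rule off_telescope) (simp add: width_def)
  have off_height: "off height m = Y m - Y 0" for m
    by (rule off_telescope) (simp add: height_def)
  obtain i where i: "X i \<le> a" "a < X (i + 1)"
    using incr_seq_interval[of X, OF X_incr] by blast
  obtain j where j: "Y j \<le> b" "b < Y (j + 1)"
    using incr_seq_interval[of Y, OF Y_incr] by blast
  have "(THE m. off width m \<le> a - X 0 \<and> a - X 0 < off width (m + 1)) = i"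
    unfolding off_width using i incr_seq_interval[of X, OF X_incr, of a] by (intro the1_equality) auto
  moreover have "(THE m. off height m \<le> b - Y 0 \<and> b - Y 0 < off height (m + 1)) = j"
    unfolding off_height using j incr_seq_interval[of Y, OF Y_incr, of b] by (intro the1_equality) auto
  ultimately have "omega_conf n desubst (a - X 0, b - Y 0) = block i j (nat (a - X i), nat (b - Y j))"
    unfolding omega_conf_def Let_def widths heights by (simp add: omega_tile_desubst off_width off_height)
  also have "\<dots> = x (a, b)"
    using i j unfolding block_def width_def height_def by auto
  finally show ?thesis .
qed

lemma eq_shift_omega_conf: "x = shift (- X 0, - Y 0) (omega_conf n desubst)"
  unfolding shift_def using omega_conf_desubst by auto

end

section \<open>The J-columns of a configuration of \<open>\<Omega>\<^sub>n\<close>\<close>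

lemma Tset_step_right:
  assumes "t \<in> Tset n" "fst (BOTTOM t) \<noteq> 0"
  shows "snd (snd (RIGHT t)) = snd (snd (LEFT t)) + 1" "0 \<le> snd (snd (LEFT t))" "snd (snd (LEFT t)) \<le> int n"
proof -
  have "snd (snd (RIGHT t)) = snd (snd (LEFT t)) + 1 \<and> 0 \<le> snd (snd (LEFT t)) \<and> snd (snd (LEFT t)) \<le> int n"
  proof (cases "fst (LEFT t) = 0")
    case True
    then obtain b c i where "t = strip_tile n b c i" "strip_index n b c i"
      using Tset_strip_tile[OF assms(1) _ assms(2)] by blast
    then show ?thesis
      by (auto simp: strip_tile_def strip_index_def strip_index'_def)
  next
    case False
    then obtain i j where "t = wtile i j" "1 \<le> i" "i \<le> int n"
      using Tset_wtile[OF assms(1) _ assms(2)] by blast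
    then show ?thesis
      by (simp add: wtile_def)
  qed
  then show "snd (snd (RIGHT t)) = snd (snd (LEFT t)) + 1" "0 \<le> snd (snd (LEFT t))" "snd (snd (LEFT t)) \<le> int n"
    by auto
qed

text \<open>Away from the J-columns the third letter of the left colours increases by one from tile to
  tile and stays in \<open>[0, n]\<close>, so J-columns are at most \<open>n + 2\<close> apart.\<close>

lemma J_column_gap:
  assumes valid: "valid_config (Tset n) x"
  shows "\<exists>c. a < c \<and> c \<le> a + (int n + 2) \<and> fst (BOTTOM (x (c, 0))) = 0"
proof (rule ccontr)
  assume "\<not> ?thesis"
  then have no_J: "fst (BOTTOM (x (c, 0))) \<noteq> 0" if "a < c" "c \<le> a + (int n + 2)" for c
    using that by auto
  have tiles: "x p \<in> Tset n" for p
    using valid unfolding valid_config_def by (cases p) auto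
  have "snd (snd (LEFT (x (a + p, 0)))) \<ge> p - 1" if "1 \<le> p" "p \<le> int n + 2" for p
    using that
  proof (induction p rule: int_ge_induct)
    case base
    then show ?case
      using Tset_step_right(2)[OF tiles no_J[of "a + 1"]] by simp
  next
    case (step p)
    have "LEFT (x (a + (p + 1), 0)) = RIGHT (x (a + p, 0))"
      using valid unfolding valid_config_def by (metis add.assoc)
    then show ?case
      using step Tset_step_right(1)[OF tiles no_J[of "a + p"]] by simp
  qed
  from this[of "int n + 2"] show False
    using Tset_step_right(3)[OF tiles no_J[of "a + (int n + 2)"]] by simp
qed

lemma J_column_enumeration:
  assumes "valid_config (Tset n) x"
  shows "\<exists>X :: int \<Rightarrow> int. (\<forall>i. X i < X (i + 1)) \<and> (\<forall>a. fst (BOTTOM (x (a, 0))) = 0 \<longleftrightarrow> (\<exists>i. X i = a))"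
proof (rule incr_seq_enumerate)
  show "\<exists>c > a. fst (BOTTOM (x (c, 0))) = 0" for a
    using J_column_gap[OF assms, of a] by auto
  show "\<exists>c < a. fst (BOTTOM (x (c, 0))) = 0" for a
    using J_column_gap[OF assms, of "a - int n - 3"] by auto
qed

theorem proposition6p9:
  fixes n :: nat
  assumes "1 \<le> n"
  shows "Omega n \<subseteq> {shift k (omega_conf n x) | k x. x \<in> Omega' n}"
proof
  fix x
  assume "x \<in> Omega n"
  then have valid: "valid_config (Tset n) x"
    unfolding Omega_def by simp
  obtain X :: "int \<Rightarrow> int" where X: "\<forall>i. X i < X (i + 1)" "\<forall>a. fst (BOTTOM (x (a, 0))) = 0 \<longleftrightarrow> (\<exists>i. X i = a)"
    using J_column_enumeration[OF valid] by blast
  obtain Y :: "int \<Rightarrow> int" where Y: "\<forall>j. Y j < Y (j + 1)" "\<forall>b. fst (BOTTOM (transpose x (b, 0))) = 0 \<longleftrightarrow> (\<exists>j. Y j = b)"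
    using J_column_enumeration[OF valid_transpose[OF valid]] by blast
  interpret J_grid n x X Y
    by unfold_locales (use assms valid X Y in \<open>simp_all add: transpose_def\<close>)
  have "desubst \<in> Omega' n"
    using desubst_valid unfolding Omega'_def by simp
  then have "shift (- X 0, - Y 0) (omega_conf n desubst) \<in> {shift k (omega_conf n x) | k x. x \<in> Omega' n}"
    by blast
  then show "x \<in> {shift k (omega_conf n x) | k x. x \<in> Omega' n}"
    by (simp only: eq_shift_omega_conf[symmetric])
qed

end
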